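(* Let $G$ be a planar graph which is not homeomorphic to $S^{1}$ and which admits a checkerboard coloring on $S^{2}$ with respect to a cellular embedding $p:G\to S^{2}$. Define $\omega_p:\Gamma(G)\to\mathbb{Z}$ by $\omega_p(\gamma)=1$ if $\gamma\in\Gamma_p^b(G)$, $\omega_p(\gamma)=-1$ if $\gamma\in\Gamma_p^w(G)$, and $\omega_p(\gamma)=0$ if $\gamma\in\Gamma(G)\setminus\Gamma_p(G)$. Then $\omega_p$ is weakly balanced on every edge $e$ of $G$, i.e. $\sum_{\gamma\in\Gamma_e(G)}\omega_p(\gamma)=0$ in $\mathbb{Z}$.
   Context: Graphs are finite, without isolated vertices and without vertices of degree one. A cycle is a subgraph homeomorphic to $S^1$; $\Gamma(G)$ is the set of all cycles of $G$, and $\Gamma_e(G)$ those containing the edge $e$. An embedding $p:G\to S^2$ is cellular if the closure of each connected component of $S^2-p(G)$ is a disk; then $\Gamma_p(G)\subset\Gamma(G)$ denotes the set of cycles that are the boundaries of the components of $S^2-p(G)$. $G$ admits a checkerboard coloring with respect to a cellular embedding $p$ if the components of $S^2-p(G)$ can be colored black and white so that any two components adjacent along an edge have different colors; $\Gamma_p^b(G)$ (resp. $\Gamma_p^w(G)$) is the set of boundaries of black (resp. white) components. *)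

theory Defs
  imports "HOL-Analysis.Analysis"
begin

text \<open>A finite multigraph (loops and multiple edges allowed) is given by a vertex set V,
an edge set E and endpoint maps src, tgt. Its geometric realization is embedded in the
2-sphere S2 (the unit sphere of R^3): vertex v goes to pv v, edge e goes to the simple
path pe e (an arc, or a simple closed curve for a loop) from pv (src e) to pv (tgt e).\<close>

definition S2 :: "(real^3) set" where
  "S2 = sphere 0 1"

definition degree :: "'e set \<Rightarrow> ('e \<Rightarrow> 'v) \<Rightarrow> ('e \<Rightarrow> 'v) \<Rightarrow> 'v \<Rightarrow> nat" where
  "degree E src tgt v = card {e\<in>E. src e = v} + card {e\<in>E. tgt e = v}"

definition is_graph :: "'v set \<Rightarrow> 'e set \<Rightarrow> ('e \<Rightarrow> 'v) \<Rightarrow> ('e \<Rightarrow> 'v) \<Rightarrow> bool" where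
  "is_graph V E src tgt \<longleftrightarrow> finite V \<and> finite E \<and>
     (\<forall>e\<in>E. src e \<in> V \<and> tgt e \<in> V) \<and>
     (\<forall>v\<in>V. degree E src tgt v \<ge> 2)"

definition is_embedding :: "'v set \<Rightarrow> 'e set \<Rightarrow> ('e \<Rightarrow> 'v) \<Rightarrow> ('e \<Rightarrow> 'v) \<Rightarrow>
    ('v \<Rightarrow> real^3) \<Rightarrow> ('e \<Rightarrow> real \<Rightarrow> real^3) \<Rightarrow> bool" where
  "is_embedding V E src tgt pv pe \<longleftrightarrow>
     inj_on pv V \<and> pv ` V \<subseteq> S2 \<and>
     (\<forall>e\<in>E. simple_path (pe e) \<and> pathstart (pe e) = pv (src e) \<and>
              pathfinish (pe e) = pv (tgt e) \<and> path_image (pe e) \<subseteq> S2) \<and>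
     (\<forall>e\<in>E. \<forall>v\<in>V. pv v \<in> path_image (pe e) \<longrightarrow> v = src e \<or> v = tgt e) \<and>
     (\<forall>e\<in>E. \<forall>e'\<in>E. e \<noteq> e' \<longrightarrow>
         path_image (pe e) \<inter> path_image (pe e') \<subseteq> pv ` {src e, tgt e})"

definition edges_image :: "('e \<Rightarrow> real \<Rightarrow> real^3) \<Rightarrow> 'e set \<Rightarrow> (real^3) set" where
  "edges_image pe C = (\<Union>e\<in>C. path_image (pe e))"

definition graph_image :: "'v set \<Rightarrow> 'e set \<Rightarrow> ('v \<Rightarrow> real^3) \<Rightarrow> ('e \<Rightarrow> real \<Rightarrow> real^3)
    \<Rightarrow> (real^3) set" where
  "graph_image V E pv pe = pv ` V \<union> edges_image pe E"

definition faces :: "'v set \<Rightarrow> 'e set \<Rightarrow> ('v \<Rightarrow> real^3) \<Rightarrow> ('e \<Rightarrow> real \<Rightarrow> real^3)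
    \<Rightarrow> (real^3) set set" where
  "faces V E pv pe = components (S2 - graph_image V E pv pe)"

text \<open>Boundary of a face, taken in S2 (a face is open in S2).\<close>
definition face_boundary :: "(real^3) set \<Rightarrow> (real^3) set" where
  "face_boundary F = closure F - F"

definition is_cellular :: "'v set \<Rightarrow> 'e set \<Rightarrow> ('v \<Rightarrow> real^3) \<Rightarrow> ('e \<Rightarrow> real \<Rightarrow> real^3)
    \<Rightarrow> bool" where
  "is_cellular V E pv pe \<longleftrightarrow>
     (\<forall>F\<in>faces V E pv pe. closure F homeomorphic cball (0::complex) 1)"

text \<open>Cycles: subgraphs homeomorphic to S^1. A subgraph homeomorphic to S^1 has no isolated
vertices, so it is determined by its edge set; its realization is homeomorphic to its image
under the embedding.\<close>
definition is_cycle :: "'e set \<Rightarrow> ('e \<Rightarrow> real \<Rightarrow> real^3) \<Rightarrow> 'e set \<Rightarrow> bool" where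
  "is_cycle E pe C \<longleftrightarrow> C \<subseteq> E \<and> C \<noteq> {} \<and>
     edges_image pe C homeomorphic sphere (0::complex) 1"

definition cycles :: "'e set \<Rightarrow> ('e \<Rightarrow> real \<Rightarrow> real^3) \<Rightarrow> 'e set set" where
  "cycles E pe = {C. is_cycle E pe C}"

definition cycles_through :: "'e set \<Rightarrow> ('e \<Rightarrow> real \<Rightarrow> real^3) \<Rightarrow> 'e \<Rightarrow> 'e set set" where
  "cycles_through E pe e = {C \<in> cycles E pe. e \<in> C}"

text \<open>Checkerboard colouring: col F = True means black, False means white.\<close>
definition is_checkerboard :: "'v set \<Rightarrow> 'e set \<Rightarrow> ('v \<Rightarrow> real^3) \<Rightarrow> ('e \<Rightarrow> real \<Rightarrow> real^3)
    \<Rightarrow> ((real^3) set \<Rightarrow> bool) \<Rightarrow> bool" where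
  "is_checkerboard V E pv pe col \<longleftrightarrow>
     (\<forall>F1\<in>faces V E pv pe. \<forall>F2\<in>faces V E pv pe.
        F1 \<noteq> F2 \<and> (\<exists>e\<in>E. path_image (pe e) \<subseteq> closure F1 \<inter> closure F2)
        \<longrightarrow> col F1 \<noteq> col F2)"

definition black_cycles :: "'v set \<Rightarrow> 'e set \<Rightarrow> ('v \<Rightarrow> real^3) \<Rightarrow> ('e \<Rightarrow> real \<Rightarrow> real^3)
    \<Rightarrow> ((real^3) set \<Rightarrow> bool) \<Rightarrow> 'e set set" where
  "black_cycles V E pv pe col = {C \<in> cycles E pe.
     \<exists>F\<in>faces V E pv pe. col F \<and> face_boundary F = edges_image pe C}"

definition white_cycles :: "'v set \<Rightarrow> 'e set \<Rightarrow> ('v \<Rightarrow> real^3) \<Rightarrow> ('e \<Rightarrow> real \<Rightarrow> real^3)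
    \<Rightarrow> ((real^3) set \<Rightarrow> bool) \<Rightarrow> 'e set set" where
  "white_cycles V E pv pe col = {C \<in> cycles E pe.
     \<exists>F\<in>faces V E pv pe. \<not> col F \<and> face_boundary F = edges_image pe C}"

definition omega :: "'v set \<Rightarrow> 'e set \<Rightarrow> ('v \<Rightarrow> real^3) \<Rightarrow> ('e \<Rightarrow> real \<Rightarrow> real^3)
    \<Rightarrow> ((real^3) set \<Rightarrow> bool) \<Rightarrow> 'e set \<Rightarrow> int" where
  "omega V E pv pe col C =
     (if C \<in> black_cycles V E pv pe col then 1
      else if C \<in> white_cycles V E pv pe col then -1 else 0)"

end

theory Submission
  imports Defs "HOL-Homology.Invariance_of_Domain" "HOL-Complex_Analysis.Contour_Integration"
begin

text \<open>Every face F of a cellular embedding is the image of an open disc whose boundary circle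
  lies in the graph. The open disc contains no point of the graph: otherwise the edges entering
  it would contain a cycle or a path between two boundary vertices, closed up by a boundary arc,
  and the Jordan curve theorem on S2 would split the connected face. Hence the boundary of F is
  the edge set of a cycle, and distinct faces have distinct boundary cycles unless the graph is
  itself a circle. An edge lies on the boundary of a face on each side of such a circle through
  it; since faces sharing an edge have different colours and there are only two colours, it
  lies on exactly two faces, one black and one white. Their boundary cycles are the only cycles
  through the edge with nonzero weight, and the weights cancel.\<close>

section \<open>Circles and arcs\<close>

lemma exp_i_real_inj:
  assumes "exp (\<i> * of_real s1) = exp (\<i> * of_real s2)" and "\<bar>s1 - s2\<bar> < 2*pi"
  shows "s1 = s2"
proof -
  obtain n :: int where "\<i> * of_real s1 = \<i> * of_real s2 + of_real (of_int (2*n) * pi) * \<i>"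
    using assms(1) unfolding exp_eq by blast
  then have "\<i> * complex_of_real s1 = \<i> * of_real (s2 + of_int (2*n) * pi)"
    by (simp add: algebra_simps)
  then have "complex_of_real s1 = of_real (s2 + of_int (2*n) * pi)" by simp
  then have s: "s1 = s2 + of_int (2*n) * pi" using of_real_eq_iff by blast
  then have "\<bar>real_of_int n\<bar> * (2*pi) < 1 * (2*pi)" using assms(2) by (simp add: abs_mult)
  then have "\<bar>real_of_int n\<bar> < 1" using mult_less_cancel_right_pos pi_gt_zero by simp
  then have "n = 0" by linarith
  then show ?thesis using s by simp
qed

lemma homeomorphic_circle_simple_loop:
  fixes J :: "'a::real_normed_vector set"
  assumes "J homeomorphic sphere (0::complex) 1"
  obtains c where "simple_path c" "pathfinish c = pathstart c" "path_image c = J"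
proof -
  obtain f g where hom: "homeomorphism (sphere (0::complex) 1) J f g"
    using assms homeomorphic_sym unfolding homeomorphic_def by blast
  have "continuous_on (sphere 0 1) f" "inj_on f (sphere 0 1)"
    using hom unfolding homeomorphism_def by (metis inj_on_inverseI)+
  then have "simple_path (f \<circ> circlepath 0 1)"
    by (intro simple_path_continuous_image) (simp_all add: simple_path_circlepath)
  moreover have "pathfinish (f \<circ> circlepath 0 1) = pathstart (f \<circ> circlepath 0 1)"
    by (simp add: pathfinish_compose pathstart_compose)
  moreover have "path_image (f \<circ> circlepath 0 1) = J"
    using hom by (simp add: path_image_compose homeomorphism_def)
  ultimately show ?thesis using that by blast
qed

lemma homeomorphism_cball_sphere_image:
  fixes h :: "complex \<Rightarrow> 'a::t2_space"
  assumes "homeomorphism (cball 0 1) D h k"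
  shows "h ` sphere 0 1 homeomorphic sphere (0::complex) 1"
proof -
  have "continuous_on (sphere 0 1) h" "inj_on h (sphere 0 1)"
    using assms unfolding homeomorphism_def
    by (auto intro: continuous_on_subset inj_on_inverseI[of _ k] simp: sphere_cball)
  then obtain g where "homeomorphism (sphere 0 1) (h ` sphere 0 1) h g"
    using homeomorphism_compact[OF compact_sphere] by blast
  then show ?thesis using homeomorphic_def homeomorphic_sym by blast
qed

lemma circle_angle_parametrization:
  fixes J :: "'a::topological_space set"
  assumes "J homeomorphic sphere (0::complex) 1" "y \<in> J"
  shows "\<exists>\<rho>::real \<Rightarrow> 'a. continuous_on UNIV \<rho> \<and> \<rho> 0 = y \<and> range \<rho> \<subseteq> J \<and> inj_on \<rho> (ball 0 pi)"
proof -
  obtain \<phi> \<psi> where hom: "homeomorphism (sphere (0::complex) 1) J \<phi> \<psi>"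
    using assms(1) homeomorphic_sym unfolding homeomorphic_def by blast
  have \<phi>J: "\<phi> z \<in> J" and \<psi>\<phi>: "\<psi> (\<phi> z) = z" if "z \<in> sphere 0 1" for z
    using hom that unfolding homeomorphism_def by blast+
  have cont\<phi>: "continuous_on (sphere 0 1) \<phi>" using hom by (simp add: homeomorphism_def)
  define w where "w = \<psi> y"
  have w: "w \<in> sphere 0 1" "\<phi> w = y" using hom assms(2) unfolding w_def homeomorphism_def by blast+
  define \<rho> where "\<rho> = (\<lambda>s::real. \<phi> (w * exp (\<i> * of_real s)))"
  have wnorm: "norm (w * exp (\<i> * of_real s)) = 1" for s
    using w(1) by (simp add: norm_mult norm_exp_i_times)
  then have wexp: "w * exp (\<i> * of_real s) \<in> sphere 0 1" for s by simp
  have "continuous_on UNIV \<rho>"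
    unfolding \<rho>_def by (rule continuous_on_compose2[OF cont\<phi>]) (auto intro!: continuous_intros simp: wnorm)
  moreover have "\<rho> 0 = y" using w by (simp add: \<rho>_def)
  moreover have "range \<rho> \<subseteq> J" using \<phi>J wexp by (auto simp: \<rho>_def)
  moreover have "inj_on \<rho> (ball 0 pi)"
  proof (rule inj_onI)
    fix s1 s2 assume s: "s1 \<in> ball 0 pi" "s2 \<in> ball 0 pi" "\<rho> s1 = \<rho> s2"
    then have "w * exp (\<i> * of_real s1) = w * exp (\<i> * of_real s2)"
      using \<psi>\<phi> wexp unfolding \<rho>_def by metis
    then have "exp (\<i> * of_real s1) = exp (\<i> * of_real s2)" using w(1) by auto
    moreover have "\<bar>s1 - s2\<bar> < 2*pi" using s(1,2) by (auto simp: dist_real_def)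
    ultimately show "s1 = s2" by (rule exp_i_real_inj)
  qed
  ultimately show ?thesis by blast
qed

text \<open>Reading a local angle parametrization of J back through the arc gives an injective
  continuous map of an interval into the reals, whose image is open by invariance of domain.\<close>

lemma arc_preimage_circle_locally_open:
  fixes \<gamma> :: "real \<Rightarrow> 'a::metric_space"
  assumes arc: "homeomorphism {a..b} (\<gamma> ` {a..b}) \<gamma> g"
    and J: "J homeomorphic sphere (0::complex) 1"
    and t: "t \<in> {a..b}" "\<gamma> t \<in> J" and r: "r > 0" "ball (\<gamma> t) r \<inter> J \<subseteq> \<gamma> ` {a..b}"
  shows "\<exists>\<epsilon>>0. ball t \<epsilon> \<subseteq> \<gamma> -` J"
proof -
  obtain \<rho> :: "real \<Rightarrow> 'a" where \<rho>: "continuous_on UNIV \<rho>" "\<rho> 0 = \<gamma> t" "range \<rho> \<subseteq> J" "inj_on \<rho> (ball 0 pi)"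
    using circle_angle_parametrization[OF J t(2)] by blast
  have g\<gamma>: "g (\<gamma> t) = t" using arc t(1) by (simp add: homeomorphism_def)
  have \<gamma>g: "\<gamma> (g z) = z" if "z \<in> \<gamma> ` {a..b}" for z
    using arc that unfolding homeomorphism_def by blast
  have contg: "continuous_on (\<gamma> ` {a..b}) g" using arc by (simp add: homeomorphism_def)
  have "open (\<rho> -` ball (\<gamma> t) r)" using open_vimage[OF open_ball \<rho>(1)] .
  moreover have "0 \<in> \<rho> -` ball (\<gamma> t) r" using \<rho>(2) r(1) by simp
  ultimately obtain \<delta>0 where \<delta>0: "\<delta>0 > 0" "ball 0 \<delta>0 \<subseteq> \<rho> -` ball (\<gamma> t) r"
    using open_contains_ball by blast
  define \<delta> where "\<delta> = min \<delta>0 pi"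
  have \<rho>arc: "\<rho> s \<in> \<gamma> ` {a..b}" if "s \<in> ball 0 \<delta>" for s
  proof -
    have "s \<in> ball 0 \<delta>0" using that by (simp add: \<delta>_def)
    then have "\<rho> s \<in> ball (\<gamma> t) r" using \<delta>0(2) by blast
    then show ?thesis using r(2) \<rho>(3) by blast
  qed
  have "open ((g \<circ> \<rho>) ` ball 0 \<delta>)"
  proof (rule invariance_of_domain[OF _ open_ball])
    show "continuous_on (ball 0 \<delta>) (g \<circ> \<rho>)"
      using \<rho>arc by (intro continuous_on_compose continuous_on_subset[OF \<rho>(1)] continuous_on_subset[OF contg]) auto
    have "inj_on \<rho> (ball 0 \<delta>)" using \<rho>(4) by (rule inj_on_subset) (simp add: \<delta>_def subset_ball)
    then show "inj_on (g \<circ> \<rho>) (ball 0 \<delta>)"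
      using \<gamma>g \<rho>arc unfolding inj_on_def by (metis comp_apply)
  qed
  moreover have "t \<in> (g \<circ> \<rho>) ` ball 0 \<delta>"
    using \<delta>0(1) \<rho>(2) g\<gamma> by (auto simp: \<delta>_def intro!: image_eqI[of t _ 0])
  ultimately obtain \<epsilon> where "\<epsilon> > 0" "ball t \<epsilon> \<subseteq> (g \<circ> \<rho>) ` ball 0 \<delta>"
    using open_contains_ball by blast
  moreover have "(g \<circ> \<rho>) ` ball 0 \<delta> \<subseteq> \<gamma> -` J" using \<gamma>g \<rho>arc \<rho>(3) by (auto simp: image_subset_iff)
  ultimately show ?thesis by blast
qed

section \<open>The sphere S2\<close>

lemma S2_closed [simp]: "closed S2" and S2_connected: "connected S2"
  by (auto simp: S2_def intro: connected_sphere)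

lemma S2_islimpt: "q \<in> S2 \<Longrightarrow> q islimpt S2"
proof (rule connected_imp_perfect[OF S2_connected])
  fix x
  show "S2 \<noteq> {x}"
  proof
    assume "S2 = {x}"
    moreover have "(axis 1 1 :: real^3) \<in> S2" "(- axis 1 1 :: real^3) \<in> S2" by (auto simp: S2_def)
    ultimately have a: "axis 1 1 = x" and b: "- axis 1 1 = x" by blast+
    have "x $ 1 = 1" using a[symmetric] by simp
    moreover have "x $ 1 = -1" using b[symmetric] by simp
    ultimately show False by simp
  qed
qed

lemma S2_not_homeomorphic_circle: "\<not> (S2 homeomorphic sphere (0::complex) 1)"
proof
  assume "S2 homeomorphic sphere (0::complex) 1"
  moreover have "simply_connected S2" unfolding S2_def by (rule simply_connected_sphere) simp
  ultimately have "simply_connected (sphere (0::complex) 1)"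
    using homeomorphic_simply_connected_eq by blast
  then show False by (simp add: simply_connected_sphere_eq)
qed

lemma S2_punctured_homeomorphic_plane:
  assumes "q \<in> S2"
  obtains \<sigma> \<tau> where "homeomorphism (S2 - {q}) (UNIV::complex set) \<sigma> \<tau>"
proof -
  define P :: "(real^3) set" where "P = {x. axis 1 1 \<bullet> x = 0}"
  have "affine P" unfolding P_def by (simp add: affine_hyperplane)
  moreover have "aff_dim P = 2" unfolding P_def by (subst aff_dim_hyperplane) auto
  ultimately have "S2 - {q} homeomorphic P"
    using assms unfolding S2_def by (intro homeomorphic_punctured_sphere_affine) auto
  also have "P homeomorphic (UNIV::complex set)"
    using \<open>affine P\<close> \<open>aff_dim P = 2\<close> by (simp add: homeomorphic_affine_sets_eq)
  finally show ?thesis using that unfolding homeomorphic_def by blast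
qed

lemma openin_S2_chart_image:
  assumes "homeomorphism (S2 - {q}) (UNIV::complex set) \<sigma> \<tau>" and "open A"
  shows "openin (top_of_set S2) (\<tau> ` A)"
proof -
  have "homeomorphism UNIV (S2 - {q}) \<tau> \<sigma>" using assms(1) homeomorphism_sym by blast
  then have "openin (top_of_set (S2 - {q})) (\<tau> ` A)"
    using homeomorphism_imp_open_map \<open>open A\<close> by (metis open_openin subtopology_UNIV)
  moreover have "openin (top_of_set S2) (S2 - {q})" by (simp add: openin_delete)
  ultimately show ?thesis using openin_trans by blast
qed

lemma openin_S2_meets_closure:
  assumes "openin (top_of_set S2) U" "y \<in> U" "y \<in> closure A" "A \<subseteq> S2"
  shows "U \<inter> A \<noteq> {}"
proof -
  obtain Q where Q: "open Q" "U = S2 \<inter> Q" using assms(1) openin_open by blast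
  then have "Q \<inter> A \<noteq> {}" using assms(2,3) open_Int_closure_eq_empty by (metis IntD2 disjoint_iff)
  then show ?thesis using Q assms(4) by blast
qed

lemma S2_chart_image_partition:
  assumes hom: "homeomorphism (S2 - {q}) (UNIV::complex set) \<sigma> \<tau>" and q: "q \<in> S2"
    and J: "J \<subseteq> S2 - {q}" and AB: "A \<inter> B = {}" "A \<union> B = - \<sigma> ` J"
  shows "\<tau> ` A \<inter> insert q (\<tau> ` B) = {}" "\<tau> ` A \<union> insert q (\<tau> ` B) = S2 - J"
proof -
  have \<tau>\<sigma>: "\<tau> (\<sigma> x) = x" if "x \<in> S2 - {q}" for x using hom that by (simp add: homeomorphism_def)
  have \<sigma>\<tau>: "\<sigma> (\<tau> w) = w" for w using hom by (simp add: homeomorphism_def)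
  have \<tau>S: "\<tau> w \<in> S2 - {q}" for w using hom unfolding homeomorphism_def by blast
  show "\<tau> ` A \<inter> insert q (\<tau> ` B) = {}"
    using AB(1) \<tau>S \<sigma>\<tau> by (auto, metis disjoint_iff)
  show "\<tau> ` A \<union> insert q (\<tau> ` B) = S2 - J"
  proof
    show "\<tau> ` A \<union> insert q (\<tau> ` B) \<subseteq> S2 - J"
    proof
      fix p assume "p \<in> \<tau> ` A \<union> insert q (\<tau> ` B)"
      then consider w where "w \<in> A \<union> B" "p = \<tau> w" | "p = q" by blast
      then show "p \<in> S2 - J"
      proof cases
        case 1
        then have "w \<notin> \<sigma> ` J" using AB(2) by auto
        then show ?thesis using 1 \<tau>S \<sigma>\<tau> by (metis DiffD1 DiffI image_eqI)
      qed (use q J in auto)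
    qed
    show "S2 - J \<subseteq> \<tau> ` A \<union> insert q (\<tau> ` B)"
    proof
      fix p assume p: "p \<in> S2 - J"
      show "p \<in> \<tau> ` A \<union> insert q (\<tau> ` B)"
      proof (cases "p = q")
        case False
        have "\<sigma> p \<notin> \<sigma> ` J"
        proof
          assume "\<sigma> p \<in> \<sigma> ` J"
          then obtain z where "z \<in> J" "\<sigma> p = \<sigma> z" by blast
          then have "p = z" using \<tau>\<sigma>[of p] \<tau>\<sigma>[of z] J p False by auto
          then show False using p \<open>z \<in> J\<close> by auto
        qed
        then have "\<sigma> p \<in> A \<union> B" using AB(2) by auto
        then show ?thesis using \<tau>\<sigma>[of p] p False by (metis DiffD1 Un_iff image_eqI singletonD Diff_iff insertCI)
      qed simp
    qed
  qed
qed

lemma S2_chart_closure_image: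
  assumes hom: "homeomorphism (S2 - {q}) (UNIV::complex set) \<sigma> \<tau>"
    and "J \<subseteq> S2 - {q}" "\<sigma> ` J \<subseteq> closure A"
  shows "J \<subseteq> closure (\<tau> ` A)"
proof
  fix z assume "z \<in> J"
  have "continuous_on UNIV \<tau>" using hom by (simp add: homeomorphism_def)
  then have "continuous_on (closure A) \<tau>" using continuous_on_subset by blast
  then have "\<tau> ` closure A \<subseteq> closure (\<tau> ` A)"
    by (rule image_closure_subset) (simp_all add: closure_subset)
  moreover have "\<tau> (\<sigma> z) = z" using hom assms(2) \<open>z \<in> J\<close> by (auto simp: homeomorphism_def)
  ultimately show "z \<in> closure (\<tau> ` A)" using assms(3) \<open>z \<in> J\<close> by (metis image_subset_iff subsetD)
qed

lemma S2_chart_near_pole: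
  assumes hom: "homeomorphism (S2 - {q}) (UNIV::complex set) \<sigma> \<tau>" and B: "bounded (- B)"
  obtains \<delta> where "\<delta> > 0" "S2 \<inter> ball q \<delta> - {q} \<subseteq> \<tau> ` B"
proof -
  have \<tau>\<sigma>: "\<tau> (\<sigma> x) = x" if "x \<in> S2 - {q}" for x using hom that by (simp add: homeomorphism_def)
  have cont\<tau>: "continuous_on UNIV \<tau>" and \<tau>S: "\<And>w. \<tau> w \<in> S2 - {q}"
    using hom unfolding homeomorphism_def by blast+
  obtain R where "\<forall>x\<in>- B. norm x \<le> R" using B unfolding bounded_pos by blast
  then have R: "- B \<subseteq> cball 0 R" by auto
  have "compact (\<tau> ` cball 0 R)"
    using compact_continuous_image[OF continuous_on_subset[OF cont\<tau> subset_UNIV] compact_cball] .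
  then have "open (- \<tau> ` cball 0 R)" using compact_imp_closed by blast
  moreover have "q \<in> - \<tau> ` cball 0 R" using \<tau>S by blast
  ultimately obtain \<delta> where \<delta>: "\<delta> > 0" "ball q \<delta> \<subseteq> - \<tau> ` cball 0 R"
    using open_contains_ball by blast
  have "p \<in> \<tau> ` B" if "p \<in> S2 \<inter> ball q \<delta> - {q}" for p
  proof -
    have p: "\<tau> (\<sigma> p) = p" using \<tau>\<sigma> that by blast
    have "\<sigma> p \<notin> cball 0 R"
    proof
      assume "\<sigma> p \<in> cball 0 R"
      then have "p \<in> \<tau> ` cball 0 R" using p by (metis imageI)
      then show False using \<delta>(2) that by blast
    qed
    then have "\<sigma> p \<in> B" using R by blast
    then show ?thesis using p by (metis imageI)
  qed
  then show ?thesis using that \<delta>(1) by blast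
qed

lemma S2_chart_unbounded_region:
  assumes hom: "homeomorphism (S2 - {q}) (UNIV::complex set) \<sigma> \<tau>" and q: "q \<in> S2"
    and B: "open B" "connected B" "bounded (- B)"
  shows "openin (top_of_set S2) (insert q (\<tau> ` B))" "connected (insert q (\<tau> ` B))"
proof -
  obtain \<delta> where \<delta>: "\<delta> > 0" "S2 \<inter> ball q \<delta> - {q} \<subseteq> \<tau> ` B"
    using S2_chart_near_pole[OF hom B(3)] by blast
  have "\<tau> w \<in> S2" for w using hom unfolding homeomorphism_def by blast
  then have "insert q (\<tau> ` B) = \<tau> ` B \<union> (S2 \<inter> ball q \<delta>)" using q \<delta> by auto
  moreover have "openin (top_of_set S2) (S2 \<inter> ball q \<delta>)" by (simp add: openin_open_Int)
  ultimately show "openin (top_of_set S2) (insert q (\<tau> ` B))"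
    by (metis openin_Un openin_S2_chart_image[OF hom B(1)])
  have q_closure: "q \<in> closure (\<tau> ` B)"
    unfolding closure_approachable
  proof (intro allI impI)
    fix e :: real assume "e > 0"
    obtain p where p: "p \<in> S2" "p \<noteq> q" "dist p q < min e \<delta>"
      using S2_islimpt[OF q] \<open>e > 0\<close> \<delta>(1) unfolding islimpt_approachable by (metis min_less_iff_conj)
    then have "p \<in> \<tau> ` B" using \<delta>(2) by (auto simp: dist_commute)
    then show "\<exists>y\<in>\<tau> ` B. dist y q < e" using p by force
  qed
  show "connected (insert q (\<tau> ` B))"
  proof (rule connected_intermediate_closure)
    have "continuous_on UNIV \<tau>" using hom by (simp add: homeomorphism_def)
    then show "connected (\<tau> ` B)" using B(2) connected_continuous_image continuous_on_subset by blast
  qed (use q_closure closure_subset[of "\<tau> ` B"] in auto)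
qed

text \<open>Reduced to the planar theorem through a chart at a point q off the curve; q joins the
  outside.\<close>

lemma Jordan_curve_S2:
  fixes c :: "real \<Rightarrow> real^3"
  assumes sp: "simple_path c" and lp: "pathfinish c = pathstart c" and sub: "path_image c \<subseteq> S2"
  obtains U1 U2 where "openin (top_of_set S2) U1" "openin (top_of_set S2) U2"
    "connected U1" "connected U2" "U1 \<inter> U2 = {}" "U1 \<union> U2 = S2 - path_image c"
    "path_image c \<subseteq> closure U1" "path_image c \<subseteq> closure U2"
proof -
  let ?J = "path_image c"
  have "?J \<noteq> S2"
    using S2_not_homeomorphic_circle homeomorphic_simple_path_image_circle[OF sp lp, of 1 0] by auto
  then obtain q where q: "q \<in> S2" "q \<notin> ?J" using sub by blast
  obtain \<sigma> \<tau> where hom: "homeomorphism (S2 - {q}) (UNIV::complex set) \<sigma> \<tau>"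
    using S2_punctured_homeomorphic_plane[OF q(1)] by blast
  have J: "?J \<subseteq> S2 - {q}" using sub q by auto
  have cont\<sigma>: "continuous_on (S2 - {q}) \<sigma>" and cont\<tau>: "continuous_on UNIV \<tau>"
    using hom by (auto simp: homeomorphism_def)
  have "\<tau> (\<sigma> x) = x" if "x \<in> ?J" for x using hom J that by (auto simp: homeomorphism_def)
  then have "inj_on \<sigma> ?J" by (rule inj_on_inverseI)
  then have sp': "simple_path (\<sigma> \<circ> c)"
    by (rule simple_path_continuous_image[OF sp continuous_on_subset[OF cont\<sigma> J]])
  have lp': "pathfinish (\<sigma> \<circ> c) = pathstart (\<sigma> \<circ> c)"
    using lp by (simp add: pathfinish_compose pathstart_compose)
  define ins where "ins = inside (\<sigma> ` ?J)"
  define outs where "outs = outside (\<sigma> ` ?J)"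
  have "open ins" "connected ins" "bounded ins" "open outs" "connected outs"
    "ins \<inter> outs = {}" "ins \<union> outs = - \<sigma> ` ?J" "frontier ins = \<sigma> ` ?J" "frontier outs = \<sigma> ` ?J"
    using Jordan_inside_outside[OF sp' lp'] unfolding ins_def outs_def path_image_compose by blast+
  note JO = this
  have "- outs = ins \<union> \<sigma> ` ?J" using JO(6,7) by blast
  moreover have "compact (\<sigma> ` ?J)"
    using compact_continuous_image[OF continuous_on_subset[OF cont\<sigma> J]] sp
    by (simp add: compact_simple_path_image)
  ultimately have "bounded (- outs)" using JO(3) by (simp add: compact_imp_bounded)
  then have U2: "openin (top_of_set S2) (insert q (\<tau> ` outs))" "connected (insert q (\<tau> ` outs))"
    using S2_chart_unbounded_region[OF hom q(1) JO(4,5)] by blast+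
  have "\<sigma> ` ?J \<subseteq> closure ins" "\<sigma> ` ?J \<subseteq> closure outs"
    using JO(8,9) unfolding frontier_def by blast+
  then have cl: "?J \<subseteq> closure (\<tau> ` ins)" "?J \<subseteq> closure (insert q (\<tau> ` outs))"
    using S2_chart_closure_image[OF hom J] closure_mono[of "\<tau> ` outs"] by (blast, meson subset_insertI order_trans)
  have U1: "openin (top_of_set S2) (\<tau> ` ins)" "connected (\<tau> ` ins)"
    using openin_S2_chart_image[OF hom JO(1)] JO(2) cont\<tau> connected_continuous_image continuous_on_subset
    by blast+
  show ?thesis by (rule that[OF U1(1) U2(1) U1(2) U2(2) S2_chart_image_partition[OF hom q(1) J JO(6,7)] cl])
qed

definition nowhere_dense_S2 :: "(real^3) set \<Rightarrow> bool" where
  "nowhere_dense_S2 A \<longleftrightarrow> closed A \<and> (\<forall>Q. openin (top_of_set S2) Q \<and> Q \<subseteq> A \<longrightarrow> Q = {})"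

lemma nowhere_dense_S2_Un:
  assumes "nowhere_dense_S2 A" "nowhere_dense_S2 B" shows "nowhere_dense_S2 (A \<union> B)"
  unfolding nowhere_dense_S2_def
proof (intro conjI allI impI)
  show "closed (A \<union> B)" using assms by (auto simp: nowhere_dense_S2_def)
  fix Q assume Q: "openin (top_of_set S2) Q \<and> Q \<subseteq> A \<union> B"
  have "closed A" using assms by (auto simp: nowhere_dense_S2_def)
  then have "openin (top_of_set S2) (Q - A)"
    using Q by (metis Diff_eq openin_Int_open open_Compl)
  moreover have "Q - A \<subseteq> B" using Q by auto
  ultimately have "Q \<subseteq> A" using assms(2) by (auto simp: nowhere_dense_S2_def)
  then show "Q = {}" using Q assms(1) by (auto simp: nowhere_dense_S2_def)
qed

lemma nowhere_dense_S2_Union: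
  "finite \<F> \<Longrightarrow> (\<And>A. A \<in> \<F> \<Longrightarrow> nowhere_dense_S2 A) \<Longrightarrow> nowhere_dense_S2 (\<Union>\<F>)"
proof (induction \<F> rule: finite_induct)
  case empty
  show ?case by (simp add: nowhere_dense_S2_def)
next
  case insert
  then show ?case by (simp add: nowhere_dense_S2_Un)
qed

lemma S2_chart_image_interior_empty:
  fixes f :: "real \<Rightarrow> real^3"
  assumes hom: "homeomorphism (S2 - {q}) (UNIV::complex set) \<sigma> \<tau>"
    and T: "compact T" "continuous_on T f" "inj_on f T" "f ` T \<subseteq> S2 - {q}"
  shows "interior (\<sigma> ` f ` T) = {}"
proof -
  have \<tau>\<sigma>: "\<tau> (\<sigma> x) = x" if "x \<in> S2 - {q}" for x using hom that by (simp add: homeomorphism_def)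
  have "continuous_on (S2 - {q}) \<sigma>" using hom by (simp add: homeomorphism_def)
  then have "continuous_on T (\<sigma> \<circ> f)"
    by (rule continuous_on_compose[OF T(2) continuous_on_subset[OF _ T(4)]])
  moreover have "inj_on (\<sigma> \<circ> f) T"
  proof (rule inj_onI)
    fix x y assume xy: "x \<in> T" "y \<in> T" "(\<sigma> \<circ> f) x = (\<sigma> \<circ> f) y"
    have "f x \<in> S2 - {q}" "f y \<in> S2 - {q}" using T(4) xy(1,2) by auto
    then have "\<tau> (\<sigma> (f x)) = f x" "\<tau> (\<sigma> (f y)) = f y" using \<tau>\<sigma> by blast+
    then have "f x = f y" using xy(3) by (metis comp_apply)
    then show "x = y" using T(3) xy(1,2) by (simp add: inj_on_def)
  qed
  ultimately obtain g where "homeomorphism T ((\<sigma> \<circ> f) ` T) (\<sigma> \<circ> f) g"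
    using homeomorphism_compact[OF T(1)] by blast
  then have "(\<sigma> \<circ> f) ` T homeomorphic T" using homeomorphic_def homeomorphic_sym by blast
  then have "interior ((\<sigma> \<circ> f) ` T) = {}" by (rule empty_interior_lowdim_gen[rotated]) simp
  then show ?thesis by (simp add: image_comp)
qed

lemma nowhere_dense_S2_injective_image:
  fixes f :: "real \<Rightarrow> real^3"
  assumes T: "compact T" and cf: "continuous_on T f" and inj: "inj_on f T" and sub: "f ` T \<subseteq> S2"
  shows "nowhere_dense_S2 (f ` T)"
  unfolding nowhere_dense_S2_def
proof (intro conjI allI impI)
  show "closed (f ` T)" using T cf compact_continuous_image compact_imp_closed by blast
  fix Q assume Q: "openin (top_of_set S2) Q \<and> Q \<subseteq> f ` T"
  show "Q = {}"
  proof (rule ccontr)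
    assume "Q \<noteq> {}"
    then obtain p where p: "p \<in> Q" by blast
    then have pS: "p \<in> S2" using Q openin_imp_subset by blast
    txt \<open>Chart at the antipode of p; only the part of T mapped near p is used.\<close>
    have "- p \<in> S2" using pS by (simp add: S2_def)
    then obtain \<sigma> \<tau> where hom: "homeomorphism (S2 - {- p}) (UNIV::complex set) \<sigma> \<tau>"
      using S2_punctured_homeomorphic_plane by blast
    have far: "S2 \<inter> cball p 1 \<subseteq> S2 - {- p}"
    proof -
      have "p - - p = 2 *\<^sub>R p" by (simp add: scaleR_2)
      then have "dist p (- p) = 2" using pS by (simp add: S2_def dist_norm)
      then show ?thesis by auto
    qed
    define Q' where "Q' = Q \<inter> ball p 1"
    have Q'o: "openin (top_of_set S2) Q'" unfolding Q'_def using Q by (simp add: openin_Int_open)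
    moreover have "Q' \<subseteq> S2 - {- p}" using far openin_imp_subset[OF Q'o] by (auto simp: Q'_def)
    ultimately have "openin (top_of_set (S2 - {- p})) Q'" using openin_subset_trans by blast
    then have "open (\<sigma> ` Q')" using homeomorphism_imp_open_map[OF hom] by simp
    define T' where "T' = T \<inter> f -` cball p 1"
    have "closedin (top_of_set T) T'" unfolding T'_def
      using continuous_closedin_preimage[OF cf closed_cball] by (simp add: Int_commute)
    then have "compact T'" using T closedin_compact by blast
    moreover have "continuous_on T' f" "inj_on f T'"
      using continuous_on_subset[OF cf] inj_on_subset[OF inj] by (auto simp: T'_def)
    moreover have "f ` T' \<subseteq> S2 - {- p}" using far sub by (auto simp: T'_def)
    ultimately have "interior (\<sigma> ` f ` T') = {}" by (rule S2_chart_image_interior_empty[OF hom])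
    moreover have "Q' \<subseteq> f ` T'" using Q by (auto simp: Q'_def T'_def)
    then have "\<sigma> ` Q' \<subseteq> interior (\<sigma> ` f ` T')"
      using \<open>open (\<sigma> ` Q')\<close> interior_maximal image_mono by metis
    moreover have "p \<in> Q'" using p by (simp add: Q'_def)
    ultimately show False by blast
  qed
qed

lemma openin_S2_injective_image:
  fixes f :: "complex \<Rightarrow> real^3"
  assumes "open U" "continuous_on U f" "inj_on f U" "f ` U \<subseteq> S2 - {q}" "q \<in> S2"
  shows "openin (top_of_set S2) (f ` U)"
proof -
  obtain \<sigma> \<tau> where hom: "homeomorphism (S2 - {q}) (UNIV::complex set) \<sigma> \<tau>"
    using S2_punctured_homeomorphic_plane[OF assms(5)] by blast
  have \<tau>\<sigma>: "\<tau> (\<sigma> x) = x" if "x \<in> S2 - {q}" for x using hom that by (simp add: homeomorphism_def)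
  have cont\<sigma>: "continuous_on (S2 - {q}) \<sigma>" using hom by (simp add: homeomorphism_def)
  have "open ((\<sigma> \<circ> f) ` U)"
  proof (rule invariance_of_domain[OF _ assms(1)])
    show "continuous_on U (\<sigma> \<circ> f)"
      using assms(2,4) by (intro continuous_on_compose continuous_on_subset[OF cont\<sigma>])
    show "inj_on (\<sigma> \<circ> f) U"
      using assms(3,4) \<tau>\<sigma> unfolding inj_on_def by (metis comp_apply image_subset_iff)
  qed
  moreover have "\<tau> ` (\<sigma> \<circ> f) ` U = f ` U"
    using assms(4) \<tau>\<sigma> by (force simp: image_comp)
  ultimately show ?thesis using openin_S2_chart_image[OF hom] by metis
qed

lemma open_injective_image_of_openin_S2:
  fixes g :: "real^3 \<Rightarrow> complex"
  assumes "openin (top_of_set S2) U" "q \<in> S2 - U" "continuous_on U g" "inj_on g U"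
  shows "open (g ` U)"
proof -
  obtain \<sigma> \<tau> where hom: "homeomorphism (S2 - {q}) (UNIV::complex set) \<sigma> \<tau>"
    using S2_punctured_homeomorphic_plane assms(2) by blast
  have \<tau>\<sigma>: "\<tau> (\<sigma> x) = x" if "x \<in> S2 - {q}" for x using hom that by (simp add: homeomorphism_def)
  have cont\<tau>: "continuous_on UNIV \<tau>" using hom by (simp add: homeomorphism_def)
  have U: "U \<subseteq> S2 - {q}" using assms(1,2) openin_imp_subset by blast
  then have "openin (top_of_set (S2 - {q})) U" using openin_subset_trans[OF assms(1)] by blast
  then have "open (\<sigma> ` U)" using homeomorphism_imp_open_map[OF hom] by simp
  have \<tau>\<sigma>U: "\<tau> ` \<sigma> ` U = U" using \<tau>\<sigma> U by (force simp: image_comp)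
  have "open ((g \<circ> \<tau>) ` \<sigma> ` U)"
  proof (rule invariance_of_domain[OF _ \<open>open (\<sigma> ` U)\<close>])
    show "continuous_on (\<sigma> ` U) (g \<circ> \<tau>)"
      using assms(3) \<tau>\<sigma>U by (intro continuous_on_compose continuous_on_subset[OF cont\<tau>]) auto
    show "inj_on (g \<circ> \<tau>) (\<sigma> ` U)"
      using assms(4) \<tau>\<sigma> U unfolding inj_on_def by (metis comp_apply image_iff subsetD)
  qed
  then show ?thesis using \<tau>\<sigma>U by (metis image_comp)
qed

lemma embedded_disc_interior:
  assumes hom: "homeomorphism (cball (0::complex) 1) D h k" and "D \<subseteq> S2" "D \<noteq> S2"
  shows "openin (top_of_set S2) (h ` ball 0 1)"
    and "\<And>U. openin (top_of_set S2) U \<Longrightarrow> U \<subseteq> D \<Longrightarrow> U \<subseteq> h ` ball 0 1"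
proof -
  have "\<not> S2 \<subseteq> D" using assms(2,3) by blast
  then obtain q where q: "q \<in> S2" "q \<notin> D" by blast
  have hD: "h ` cball 0 1 = D" and kD: "k ` D = cball 0 1"
    and kh: "\<And>x. x \<in> cball 0 1 \<Longrightarrow> k (h x) = x" and hk: "\<And>y. y \<in> D \<Longrightarrow> h (k y) = y"
    and conth: "continuous_on (cball 0 1) h" and contk: "continuous_on D k"
    using hom unfolding homeomorphism_def by blast+
  show "openin (top_of_set S2) (h ` ball 0 1)"
  proof (rule openin_S2_injective_image[OF open_ball _ _ _ q(1)])
    show "continuous_on (ball 0 1) h" using conth by (rule continuous_on_subset) auto
    show "inj_on h (ball 0 1)" using kh by (intro inj_on_inverseI[of _ k]) auto
    show "h ` ball 0 1 \<subseteq> S2 - {q}" using hD assms(2) q(2) by auto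
  qed
  fix U assume U: "openin (top_of_set S2) U" "U \<subseteq> D"
  have "open (k ` U)"
  proof (rule open_injective_image_of_openin_S2[OF U(1)])
    show "q \<in> S2 - U" using q U(2) by blast
    show "continuous_on U k" using contk U(2) by (rule continuous_on_subset)
    show "inj_on k U" using hk U(2) by (intro inj_on_inverseI[of _ h]) blast
  qed
  moreover have "k ` U \<subseteq> cball 0 1" using kD U(2) by blast
  ultimately have kU: "k ` U \<subseteq> ball 0 1" using interior_maximal interior_cball by metis
  show "U \<subseteq> h ` ball 0 1"
  proof
    fix y assume "y \<in> U"
    then have "y = h (k y)" "k y \<in> ball 0 1" using hk U(2) kU by auto
    then show "y \<in> h ` ball 0 1" by blast
  qed
qed

lemma islimpt_UN_finite:
  assumes "finite I" "y islimpt (\<Union>i\<in>I. A i)" shows "\<exists>i\<in>I. y islimpt A i"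
  using assms by (induction I rule: finite_induct) (auto simp: islimpt_Un)

section \<open>Walks in a multigraph\<close>

context
  fixes src tgt :: "'e \<Rightarrow> 'v"
begin

definition walk :: "'e set \<Rightarrow> 'v list \<Rightarrow> 'e list \<Rightarrow> bool" where
  "walk H vs es \<longleftrightarrow> length vs = Suc (length es) \<and>
     (\<forall>i<length es. es!i \<in> H \<and> {src (es!i), tgt (es!i)} = {vs!i, vs!Suc i})"

definition cycle_walk :: "'e set \<Rightarrow> 'v list \<Rightarrow> 'e list \<Rightarrow> bool" where
  "cycle_walk H vs es \<longleftrightarrow> walk H vs es \<and> es \<noteq> [] \<and> hd vs = last vs \<and> distinct (tl vs) \<and> distinct es"

definition path_walk :: "'e set \<Rightarrow> 'v list \<Rightarrow> 'e list \<Rightarrow> bool" where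
  "path_walk H vs es \<longleftrightarrow> walk H vs es \<and> es \<noteq> [] \<and> distinct vs \<and> distinct es"

definition path_walk_avoiding :: "'e set \<Rightarrow> 'v set \<Rightarrow> 'v list \<Rightarrow> 'e list \<Rightarrow> bool" where
  "path_walk_avoiding H B vs es \<longleftrightarrow> path_walk H vs es \<and> (\<forall>x\<in>set (tl vs). x \<notin> B)"

definition path_walk_between :: "'e set \<Rightarrow> 'v set \<Rightarrow> 'v list \<Rightarrow> 'e list \<Rightarrow> bool" where
  "path_walk_between H B vs es \<longleftrightarrow>
     path_walk H vs es \<and> hd vs \<in> B \<and> last vs \<in> B \<and> (\<forall>x\<in>set (butlast (tl vs)). x \<notin> B)"

lemma walk_Cons_Cons:
  "walk H (v # vs) (e # es) \<longleftrightarrow> e \<in> H \<and> vs \<noteq> [] \<and> {src e, tgt e} = {v, hd vs} \<and> walk H vs es"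
proof
  assume w: "walk H (v # vs) (e # es)"
  then have "vs \<noteq> []" by (auto simp: walk_def)
  moreover have "e \<in> H \<and> {src e, tgt e} = {v, hd vs}"
    using w \<open>vs \<noteq> []\<close> unfolding walk_def by (metis hd_conv_nth length_Cons nth_Cons_0 nth_Cons_Suc zero_less_Suc)
  moreover have "walk H vs es"
    using w unfolding walk_def by (metis Suc_less_eq length_Cons nth_Cons_Suc Suc_inject)
  ultimately show "e \<in> H \<and> vs \<noteq> [] \<and> {src e, tgt e} = {v, hd vs} \<and> walk H vs es" by blast
next
  assume a: "e \<in> H \<and> vs \<noteq> [] \<and> {src e, tgt e} = {v, hd vs} \<and> walk H vs es"
  show "walk H (v # vs) (e # es)"
    unfolding walk_def
  proof (intro conjI allI impI)
    show "length (v # vs) = Suc (length (e # es))" using a by (simp add: walk_def)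
    fix i assume i: "i < length (e # es)"
    show "(e # es) ! i \<in> H" "{src ((e # es) ! i), tgt ((e # es) ! i)} = {(v # vs) ! i, (v # vs) ! Suc i}"
      using a i by (cases i; simp add: walk_def hd_conv_nth)+
  qed
qed

lemma walk_mono: "H \<subseteq> H' \<Longrightarrow> walk H vs es \<Longrightarrow> walk H' vs es"
  unfolding walk_def by blast

lemma walk_edges_subset: "walk H vs es \<Longrightarrow> set es \<subseteq> H"
  unfolding walk_def by (metis in_set_conv_nth subsetI)

lemma walk_endpoints_in_vertices:
  assumes "walk H vs es" "e \<in> set es"
  shows "src e \<in> set vs" "tgt e \<in> set vs"
proof -
  obtain i where i: "i < length es" "e = es!i" using assms(2) by (metis in_set_conv_nth)
  then have "{src e, tgt e} = {vs!i, vs!Suc i}" "Suc i < length vs" using assms(1) by (auto simp: walk_def)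
  then show "src e \<in> set vs" "tgt e \<in> set vs" by (metis insertCI insertE nth_mem singletonD Suc_lessD)+
qed

lemma walk_vertices_subset:
  assumes "walk H vs es" "es \<noteq> []"
  shows "set vs \<subseteq> src ` H \<union> tgt ` H"
proof
  fix v assume "v \<in> set vs"
  then obtain i where i: "i < length vs" "v = vs!i" by (metis in_set_conv_nth)
  obtain n where n: "length es = Suc n" using assms(2) by (cases es) auto
  define j where "j = (if i < length es then i else n)"
  have "length vs = Suc (length es)" using assms(1) by (simp add: walk_def)
  then have "j < length es" "i = j \<or> i = Suc j" using i(1) n by (auto simp: j_def)
  moreover have "es!j \<in> H \<and> {src (es!j), tgt (es!j)} = {vs!j, vs!Suc j}"
    using assms(1) \<open>j < length es\<close> by (simp add: walk_def)
  ultimately show "v \<in> src ` H \<union> tgt ` H" using i(2) by blast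
qed

lemma walk_rev: assumes "walk H vs es" shows "walk H (rev vs) (rev es)"
  unfolding walk_def
proof (intro conjI allI impI)
  show "length (rev vs) = Suc (length (rev es))" using assms by (simp add: walk_def)
  fix i assume i: "i < length (rev es)"
  define j where "j = length es - Suc i"
  have j: "j < length es" using i by (simp add: j_def)
  have "rev es ! i = es ! j" using i by (simp add: rev_nth j_def)
  moreover have "rev vs ! i = vs ! Suc j" "rev vs ! Suc i = vs ! j"
    using i assms by (auto simp: rev_nth j_def walk_def Suc_diff_Suc)
  ultimately show "rev es ! i \<in> H" "{src (rev es ! i), tgt (rev es ! i)} = {rev vs ! i, rev vs ! Suc i}"
    using assms j unfolding walk_def by (simp_all add: insert_commute)
qed

lemma walk_snoc:
  assumes "walk H vs es" "f \<in> H" "{src f, tgt f} = {last vs, w}"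
  shows "walk H (vs @ [w]) (es @ [f])"
  unfolding walk_def
proof (rule conjI; (intro allI impI)?)
  have lv: "length vs = Suc (length es)" using assms by (simp add: walk_def)
  then show "length (vs @ [w]) = Suc (length (es @ [f]))" by simp
  fix i assume i: "i < length (es @ [f])"
  show "(es @ [f]) ! i \<in> H \<and> {src ((es @ [f]) ! i), tgt ((es @ [f]) ! i)} = {(vs @ [w]) ! i, (vs @ [w]) ! Suc i}"
  proof (cases "i < length es")
    case True then show ?thesis using assms lv by (simp add: walk_def nth_append)
  next
    case False
    then have "i = length es" using i by simp
    moreover have "vs \<noteq> []" using lv by auto
    ultimately show ?thesis using assms lv by (simp add: nth_append last_conv_nth)
  qed
qed

lemma walk_drop: "walk H vs es \<Longrightarrow> i \<le> length es \<Longrightarrow> walk H (drop i vs) (drop i es)"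
  unfolding walk_def by (auto simp: add.commute)

lemma walk_last_edge:
  assumes "walk H vs es" "es \<noteq> []"
  shows "last es \<in> H" "{src (last es), tgt (last es)} = {vs ! (length es - 1), last vs}"
proof -
  obtain n where n: "length es = Suc n" using assms(2) by (cases es) auto
  then have "length vs = Suc (Suc n)" using assms(1) by (simp add: walk_def)
  then have "last vs = vs ! Suc n" by (cases vs) (auto simp: last_conv_nth)
  moreover have "last es = es ! n" using n assms(2) by (simp add: last_conv_nth)
  ultimately show "last es \<in> H" "{src (last es), tgt (last es)} = {vs ! (length es - 1), last vs}"
    using assms(1) n by (auto simp: walk_def)
qed

lemma path_walk_rev: "path_walk H vs es \<Longrightarrow> path_walk H (rev vs) (rev es)"
  by (simp add: path_walk_def walk_rev)

lemma path_walk_hd_ne_last: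
  assumes "path_walk H vs es" shows "hd vs \<noteq> last vs"
proof -
  have "length vs \<ge> 2" using assms by (cases es) (auto simp: path_walk_def walk_def)
  moreover have "distinct vs" using assms by (simp add: path_walk_def)
  moreover have "vs \<noteq> []" using \<open>length vs \<ge> 2\<close> by auto
  ultimately show ?thesis by (simp add: hd_conv_nth last_conv_nth nth_eq_iff_index_eq)
qed

lemma path_walk_last_edge:
  assumes "path_walk H vs es" "f \<in> set es" "last vs \<in> {src f, tgt f}"
  shows "f = last es"
proof -
  have w: "walk H vs es" and dv: "distinct vs" and de: "distinct es" and ne: "es \<noteq> []"
    using assms(1) by (auto simp: path_walk_def)
  define n where "n = length es"
  have lv: "length vs = Suc n" using w by (simp add: walk_def n_def)
  obtain j where j: "j < n" "f = es ! j" using assms(2) by (metis in_set_conv_nth n_def)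
  then have "{src f, tgt f} = {vs!j, vs!Suc j}" using w by (simp add: walk_def n_def)
  moreover have "vs \<noteq> []" using lv by auto
  then have "last vs = vs ! n" using lv by (simp add: last_conv_nth)
  ultimately have "vs ! n = vs!j \<or> vs ! n = vs!Suc j" using assms(3) by auto
  then have "n = j \<or> n = Suc j" using dv lv j by (auto simp: nth_eq_iff_index_eq)
  then show ?thesis using j ne by (simp add: last_conv_nth n_def)
qed

lemma set_butlast_tl:
  assumes "length vs \<ge> 2" shows "set vs = {hd vs, last vs} \<union> set (butlast (tl vs))"
proof -
  obtain a r where vs: "vs = a # r" and "r \<noteq> []" using assms by (cases vs) (auto simp: Suc_le_eq)
  then have "set r = set (butlast r) \<union> {last r}" by (induction r rule: rev_induct) auto
  then show ?thesis using vs \<open>r \<noteq> []\<close> by auto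
qed

lemma path_walk_close_cycle:
  assumes pw: "path_walk H vs es" and f: "f \<in> H" "f \<notin> set es" "{src f, tgt f} = {last vs, w}"
    and w: "w \<in> set vs"
  shows "\<exists>vs' es'. cycle_walk H vs' es'"
proof -
  have wk: "walk H vs es" and dv: "distinct vs" and de: "distinct es"
    using pw by (auto simp: path_walk_def)
  have lv: "length vs = Suc (length es)" using wk by (simp add: walk_def)
  obtain i where i: "i < length vs" "vs ! i = w" using w by (metis in_set_conv_nth)
  have "walk H (drop i vs) (drop i es)" using walk_drop[OF wk] i lv by simp
  moreover have "last (drop i vs) = last vs" using i by (simp add: last_drop)
  ultimately have "walk H (drop i vs @ [w]) (drop i es @ [f])" using walk_snoc f by metis
  moreover have "hd (drop i vs @ [w]) = last (drop i vs @ [w])" using i by (simp add: hd_drop_conv_nth)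
  moreover have "distinct (tl (drop i vs @ [w]))"
  proof -
    have "w \<notin> set (drop (Suc i) vs)"
      using dv i by (auto simp: in_set_conv_nth nth_eq_iff_index_eq)
    moreover have "tl (drop i vs @ [w]) = drop (Suc i) vs @ [w]" using i by (simp add: drop_Suc tl_drop)
    ultimately show ?thesis using dv by (simp add: distinct_drop)
  qed
  moreover have "distinct (drop i es @ [f])" using de f(2) by (auto simp: distinct_drop dest: in_set_dropD)
  ultimately show ?thesis unfolding cycle_walk_def by blast
qed

lemma exists_other_incident_edge:
  assumes "2 \<le> card {e\<in>H. src e = x} + card {e\<in>H. tgt e = x}" "{src e, tgt e} = {u, x}" "u \<noteq> x"
  obtains f where "f \<in> H" "f \<noteq> e" "src f = x \<or> tgt f = x"
proof -
  have "\<exists>f\<in>H. f \<noteq> e \<and> (src f = x \<or> tgt f = x)"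
  proof (rule ccontr)
    assume "\<not> ?thesis"
    then have "card {e\<in>H. src e = x} + card {e\<in>H. tgt e = x}
        \<le> card ({e} \<inter> {e. src e = x}) + card ({e} \<inter> {e. tgt e = x})"
      by (intro add_mono card_mono) auto
    also have "\<dots> \<le> 1" using assms(2,3) by (cases "src e = x") (auto simp: doubleton_eq_iff)
    finally show False using assms(1) by simp
  qed
  then show ?thesis using that by blast
qed

lemma path_walk_extend:
  assumes pw: "path_walk H vs es"
    and deg: "2 \<le> card {e\<in>H. src e = last vs} + card {e\<in>H. tgt e = last vs}"
  obtains (cycle) vs' es' where "cycle_walk H vs' es'"
    | (extend) w f where "w \<notin> set vs" "path_walk H (vs @ [w]) (es @ [f])"
proof -
  have wk: "walk H vs es" and dv: "distinct vs" and de: "distinct es" and ne: "es \<noteq> []"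
    using pw by (auto simp: path_walk_def)
  define n where "n = length es"
  have lv: "length vs = Suc n" and n: "n \<ge> 1" using wk ne by (auto simp: walk_def n_def Suc_le_eq)
  have x: "last vs = vs ! n" using lv by (cases vs) (auto simp: last_conv_nth)
  have ends: "{src (last es), tgt (last es)} = {vs!(n-1), last vs}"
    using walk_last_edge[OF wk ne] by (simp add: n_def)
  have "vs!(n-1) \<noteq> last vs" using dv lv n x by (simp add: nth_eq_iff_index_eq)
  then obtain f where f: "f \<in> H" "f \<noteq> last es" "src f = last vs \<or> tgt f = last vs"
    using exists_other_incident_edge[OF deg ends] by blast
  define w where "w = (if src f = last vs then tgt f else src f)"
  have fw: "{src f, tgt f} = {last vs, w}" using f(3) by (auto simp: w_def)
  have "f \<notin> set es" using path_walk_last_edge[OF pw] f(2,3) by auto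
  show ?thesis
  proof (cases "w \<in> set vs")
    case True
    then show ?thesis using path_walk_close_cycle[OF pw f(1) \<open>f \<notin> set es\<close> fw] cycle by blast
  next
    case False
    then have "path_walk H (vs @ [w]) (es @ [f])"
      using walk_snoc[OF wk f(1) fw] dv de \<open>f \<notin> set es\<close> by (simp add: path_walk_def)
    then show ?thesis using False extend by blast
  qed
qed

lemma single_edge_walk_cases:
  assumes "e \<in> H"
  shows "(\<exists>vs es. cycle_walk H vs es) \<or> (\<exists>vs es. path_walk_between H B vs es) \<or>
    (\<exists>vs es. path_walk_avoiding H B vs es)"
proof -
  have single: "walk H [src e, tgt e] [e]" "walk H [tgt e, src e] [e]"
    using assms by (auto simp: walk_def insert_commute)
  show ?thesis
  proof (cases "src e = tgt e")
    case True
    then have "cycle_walk H [src e, src e] [e]" using single by (simp add: cycle_walk_def)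
    then show ?thesis by blast
  next
    case False
    then consider "tgt e \<notin> B" | "src e \<notin> B" | "src e \<in> B" "tgt e \<in> B" by blast
    then show ?thesis
    proof cases
      case 1
      then have "path_walk_avoiding H B [src e, tgt e] [e]"
        using single False by (simp add: path_walk_avoiding_def path_walk_def)
      then show ?thesis by blast
    next
      case 2
      then have "path_walk_avoiding H B [tgt e, src e] [e]"
        using single False by (simp add: path_walk_avoiding_def path_walk_def)
      then show ?thesis by blast
    next
      case 3
      then have "path_walk_between H B [src e, tgt e] [e]"
        using single False by (simp add: path_walk_between_def path_walk_def)
      then show ?thesis by blast
    qed
  qed
qed

lemma path_walk_length_le_card:
  assumes "finite H" "path_walk H vs es"
  shows "length vs \<le> card (src ` H \<union> tgt ` H)"
proof -
  have "distinct vs" "set vs \<subseteq> src ` H \<union> tgt ` H"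
    using assms(2) walk_vertices_subset[of H vs es] unfolding path_walk_def by blast+
  then show ?thesis using card_mono[of "src ` H \<union> tgt ` H" "set vs"] assms(1) by (simp add: distinct_card)
qed

lemma path_walk_avoiding_grow:
  assumes pa: "path_walk_avoiding H B vs es"
    and deg: "2 \<le> card {e\<in>H. src e = last vs} + card {e\<in>H. tgt e = last vs}"
  shows "(\<exists>vs es. cycle_walk H vs es) \<or> (\<exists>vs es. path_walk_between H B vs es) \<or>
    (\<exists>vs' es'. path_walk_avoiding H B vs' es' \<and> length vs < length vs')"
proof (rule path_walk_extend[OF _ deg])
  show pw: "path_walk H vs es" using pa by (simp add: path_walk_avoiding_def)
  have tlB: "\<forall>x\<in>set (tl vs). x \<notin> B" using pa by (simp add: path_walk_avoiding_def)
  have vs: "vs \<noteq> []" using pw by (auto simp: path_walk_def walk_def)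
  fix w f assume extend: "w \<notin> set vs" "path_walk H (vs @ [w]) (es @ [f])"
  consider "w \<notin> B" | "w \<in> B" "hd vs \<in> B" | "w \<in> B" "hd vs \<notin> B" by blast
  then show ?thesis
  proof cases
    case 1
    then have "path_walk_avoiding H B (vs @ [w]) (es @ [f])"
      using extend tlB vs by (simp add: path_walk_avoiding_def tl_append2)
    then show ?thesis by fastforce
  next
    case 2
    then have "path_walk_between H B (vs @ [w]) (es @ [f])"
      using extend tlB vs by (simp add: path_walk_between_def hd_append tl_append2)
    then show ?thesis by blast
  next
    case 3
    then have "\<forall>x\<in>set vs. x \<notin> B" using tlB vs by (metis list.collapse set_ConsD)
    then have "path_walk_avoiding H B (rev (vs @ [w])) (rev (es @ [f]))"
      using path_walk_rev[OF extend(2)] by (simp add: path_walk_avoiding_def)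
    then show ?thesis by fastforce
  qed
qed blast

text \<open>A longest path whose vertices after the first avoid B cannot be extended at its last
  vertex, which has degree at least two; so a cycle or a path joining two points of B appears.\<close>

lemma cycle_walk_or_path_walk_between:
  assumes finH: "finite H" and "H \<noteq> {}"
    and deg: "\<And>v. v \<notin> B \<Longrightarrow> (\<exists>e\<in>H. src e = v \<or> tgt e = v) \<Longrightarrow>
               2 \<le> card {e\<in>H. src e = v} + card {e\<in>H. tgt e = v}"
  shows "(\<exists>vs es. cycle_walk H vs es) \<or> (\<exists>vs es. path_walk_between H B vs es)"
proof (rule ccontr)
  assume none: "\<not> ?thesis"
  define P where "P = (\<lambda>(vs, es). path_walk_avoiding H B vs es)"
  obtain e where "e \<in> H" using \<open>H \<noteq> {}\<close> by blast
  then obtain p0 where "P p0" using single_edge_walk_cases[of e H B] none by (auto simp: P_def)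
  moreover have "length (fst p) < Suc (card (src ` H \<union> tgt ` H))" if "P p" for p
    using that path_walk_length_le_card[OF finH]
    by (auto simp: P_def path_walk_avoiding_def less_Suc_eq_le split: prod.splits)
  ultimately obtain p where Pp: "P p" and longest: "\<And>p'. P p' \<Longrightarrow> length (fst p') \<le> length (fst p)"
    using ex_has_greatest_nat[of P p0 "\<lambda>p. length (fst p)"] by blast
  obtain vs es where p: "p = (vs, es)" by fastforce
  have pa: "path_walk_avoiding H B vs es" using Pp p by (simp add: P_def)
  then have pw: "path_walk H vs es" and tlB: "\<forall>x\<in>set (tl vs). x \<notin> B"
    by (auto simp: path_walk_avoiding_def)
  have "length vs \<ge> 2" using pw by (cases es) (auto simp: path_walk_def walk_def)
  then have "last vs \<in> set (tl vs)" by (cases vs) auto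
  then have "last vs \<notin> B" using tlB by blast
  moreover have "last es \<in> H" "last vs \<in> {src (last es), tgt (last es)}"
    using walk_last_edge[of H vs es] pw by (auto simp: path_walk_def)
  ultimately have "2 \<le> card {e\<in>H. src e = last vs} + card {e\<in>H. tgt e = last vs}"
    by (intro deg) auto
  then obtain vs' es' where "path_walk_avoiding H B vs' es'" "length vs < length vs'"
    using path_walk_avoiding_grow[OF pa] none by blast
  then show False using longest[of "(vs', es')"] p by (simp add: P_def)
qed

end

section \<open>Embedded graphs and their faces\<close>

locale embedded_graph =
  fixes V :: "'v set" and E :: "'e set" and src tgt :: "'e \<Rightarrow> 'v"
    and pv :: "'v \<Rightarrow> real^3" and pe :: "'e \<Rightarrow> real \<Rightarrow> real^3"
  assumes graph: "is_graph V E src tgt" and emb: "is_embedding V E src tgt pv pe"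
begin

abbreviation "G \<equiv> graph_image V E pv pe"
abbreviation "edge_image e \<equiv> path_image (pe e)"
abbreviation "Faces \<equiv> faces V E pv pe"

definition edge_interior :: "'e \<Rightarrow> (real^3) set" where
  "edge_interior e = pe e ` {0<..<1}"

lemma finite_V: "finite V" and finite_E: "finite E"
  using graph by (auto simp: is_graph_def)

lemma src_in_V: "e \<in> E \<Longrightarrow> src e \<in> V" and tgt_in_V: "e \<in> E \<Longrightarrow> tgt e \<in> V"
  using graph by (auto simp: is_graph_def)

lemma degree_ge_2: "v \<in> V \<Longrightarrow> 2 \<le> card {e\<in>E. src e = v} + card {e\<in>E. tgt e = v}"
  using graph unfolding is_graph_def Defs.degree_def by blast

lemma simple_path_edge: "e \<in> E \<Longrightarrow> simple_path (pe e)"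
  and pathstart_edge: "e \<in> E \<Longrightarrow> pathstart (pe e) = pv (src e)"
  and pathfinish_edge: "e \<in> E \<Longrightarrow> pathfinish (pe e) = pv (tgt e)"
  and edge_image_subset_S2: "e \<in> E \<Longrightarrow> edge_image e \<subseteq> S2"
  using emb by (auto simp: is_embedding_def)

lemma vertex_on_edge_imp_end: "e \<in> E \<Longrightarrow> v \<in> V \<Longrightarrow> pv v \<in> edge_image e \<Longrightarrow> v = src e \<or> v = tgt e"
  using emb by (auto simp: is_embedding_def)

lemma edge_images_meet_at_ends:
  "e \<in> E \<Longrightarrow> e' \<in> E \<Longrightarrow> e \<noteq> e' \<Longrightarrow> edge_image e \<inter> edge_image e' \<subseteq> pv ` {src e, tgt e}"
  using emb by (auto simp: is_embedding_def)

lemma inj_on_pv: "inj_on pv V" and pv_in_S2: "pv ` V \<subseteq> S2"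
  using emb by (auto simp: is_embedding_def)

lemma continuous_on_edge: "e \<in> E \<Longrightarrow> continuous_on {0..1} (pe e)"
  using simple_path_edge simple_path_imp_path path_def by blast

lemma edge_inj_on: "e \<in> E \<Longrightarrow> {a..b} \<subseteq> {0..1} \<Longrightarrow> {a..b} \<noteq> {0..1} \<Longrightarrow> inj_on (pe e) {a..b}"
proof (rule inj_onI)
  fix x y assume e: "e \<in> E" and ab: "{a..b} \<subseteq> {0..1}" "{a..b} \<noteq> {0..1}"
    and xy: "x \<in> {a..b}" "y \<in> {a..b}" "pe e x = pe e y"
  then have "x = y \<or> x = 0 \<and> y = 1 \<or> x = 1 \<and> y = 0"
    using simple_path_edge[OF e] unfolding simple_path_def loop_free_def by blast
  moreover have "\<not> (0 \<in> {a..b} \<and> 1 \<in> {a..b})" using ab by auto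
  ultimately show "x = y" using xy by auto
qed

lemma graph_image_eq: "G = pv ` V \<union> (\<Union>e\<in>E. edge_image e)"
  by (simp add: graph_image_def edges_image_def)

lemma G_subset_S2: "G \<subseteq> S2"
  using pv_in_S2 edge_image_subset_S2 by (auto simp: graph_image_eq)

lemma compact_G: "compact G"
  unfolding graph_image_eq using finite_V finite_E simple_path_edge
  by (intro compact_Un compact_UN) (auto simp: finite_imp_compact compact_simple_path_image)

lemma closed_G: "closed G"
  using compact_G compact_imp_closed by blast

lemma edge_0: "e \<in> E \<Longrightarrow> pe e 0 = pv (src e)" and edge_1: "e \<in> E \<Longrightarrow> pe e 1 = pv (tgt e)"
  using pathstart_edge pathfinish_edge by (auto simp: pathstart_def pathfinish_def)

lemma edge_image_eq: "e \<in> E \<Longrightarrow> edge_image e = edge_interior e \<union> {pv (src e), pv (tgt e)}"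
proof -
  assume e: "e \<in> E"
  have "{0..1::real} = {0<..<1} \<union> {0, 1}" by auto
  then show ?thesis using edge_0[OF e] edge_1[OF e] by (simp add: path_image_def edge_interior_def image_Un)
qed

lemma edge_interior_subset: "e \<in> E \<Longrightarrow> edge_interior e \<subseteq> edge_image e"
  using edge_image_eq by auto

lemma edge_interior_midpoint: "pe e (1/2) \<in> edge_interior e"
  by (simp add: edge_interior_def)

lemma edge_interior_not_end:
  assumes "e \<in> E" "x \<in> edge_interior e" shows "x \<noteq> pv (src e)" "x \<noteq> pv (tgt e)"
proof -
  obtain t where t: "0 < t" "t < 1" "x = pe e t" using assms(2) by (auto simp: edge_interior_def)
  have "pe e t \<noteq> pe e 0" "pe e t \<noteq> pe e 1"
    using simple_path_edge[OF assms(1)] t(1,2) unfolding simple_path_def loop_free_def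
    by (metis atLeastAtMost_iff less_eq_real_def zero_less_one less_irrefl)+
  then show "x \<noteq> pv (src e)" "x \<noteq> pv (tgt e)" using edge_0[OF assms(1)] edge_1[OF assms(1)] t(3) by auto
qed

lemma edge_interior_unique: "e \<in> E \<Longrightarrow> x \<in> edge_interior e \<Longrightarrow> e' \<in> E \<Longrightarrow> x \<in> edge_image e' \<Longrightarrow> e' = e"
  using edge_images_meet_at_ends[of e e'] edge_interior_subset[of e] edge_interior_not_end[of e x] by blast

lemma edge_interior_not_vertex: "e \<in> E \<Longrightarrow> x \<in> edge_interior e \<Longrightarrow> v \<in> V \<Longrightarrow> pv v \<noteq> x"
  using vertex_on_edge_imp_end[of e v] edge_interior_subset[of e] edge_interior_not_end[of e x] by blast

lemma G_cases: "y \<in> G \<Longrightarrow> (\<exists>v\<in>V. y = pv v) \<or> (\<exists>e\<in>E. y \<in> edge_interior e)"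
  using edge_image_eq src_in_V tgt_in_V by (auto simp: graph_image_eq)

lemma edge_interior_isolated:
  assumes e: "e \<in> E" and x: "x \<in> edge_interior e"
  obtains r where "r > 0" "ball x r \<inter> G \<subseteq> edge_interior e"
proof -
  define K where "K = pv ` V \<union> (\<Union>e'\<in>E - {e}. edge_image e')"
  have "compact K" unfolding K_def using finite_V finite_E simple_path_edge
    by (intro compact_Un compact_UN) (auto simp: finite_imp_compact compact_simple_path_image)
  then have "open (- K)" by (simp add: compact_imp_closed open_Compl)
  moreover have "x \<in> - K"
    unfolding K_def using edge_interior_not_vertex[OF e x] edge_interior_unique[OF e x] by blast
  ultimately obtain r where r: "r > 0" "ball x r \<subseteq> - K" using open_contains_ball by blast
  have "ball x r \<inter> G \<subseteq> edge_interior e"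
  proof
    fix y assume y: "y \<in> ball x r \<inter> G"
    then have "y \<notin> K" using r by auto
    then have "y \<in> edge_image e" "y \<noteq> pv (src e)" "y \<noteq> pv (tgt e)"
      using y src_in_V[OF e] tgt_in_V[OF e] unfolding K_def graph_image_eq by auto
    then show "y \<in> edge_interior e" using edge_image_eq[OF e] by auto
  qed
  then show ?thesis using r(1) that by blast
qed

lemma edge_image_subset_closure_interior: "e \<in> E \<Longrightarrow> edge_image e \<subseteq> closure (edge_interior e)"
proof -
  assume e: "e \<in> E"
  have "pe e ` closure {0<..<1} \<subseteq> closure (pe e ` {0<..<1})"
  proof (rule image_closure_subset)
    show "continuous_on (closure {0<..<1}) (pe e)" using continuous_on_edge[OF e] by simp
  qed (simp_all add: closure_subset)
  then show ?thesis by (simp add: path_image_def edge_interior_def)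
qed

lemma connected_edge_interior: "e \<in> E \<Longrightarrow> connected (edge_interior e)"
  unfolding edge_interior_def
  by (rule connected_continuous_image) (auto intro: continuous_on_subset[OF continuous_on_edge])

lemma edge_interior_meets_open_at_end:
  assumes e: "e \<in> E" and "open Q" and "pv (src e) \<in> Q \<or> pv (tgt e) \<in> Q"
  shows "edge_interior e \<inter> Q \<noteq> {}"
proof -
  have "edge_image e \<inter> Q \<noteq> {}" using assms(3) edge_image_eq[OF e] by auto
  then show ?thesis
    using edge_image_subset_closure_interior[OF e] \<open>open Q\<close> open_Int_closure_eq_empty by blast
qed

lemma nowhere_dense_S2_edge_image: "e \<in> E \<Longrightarrow> nowhere_dense_S2 (edge_image e)"
proof -
  assume e: "e \<in> E"
  have "{0..1::real} = {0..1/2} \<union> {1/2..1}" by auto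
  then have split: "edge_image e = pe e ` {0..1/2} \<union> pe e ` {1/2..1}"
    unfolding path_image_def by (simp add: image_Un)
  have "nowhere_dense_S2 (pe e ` {a..b})" if "{a..b} \<subseteq> {0..1}" "{a..b} \<noteq> {0..1}" for a b
    using that edge_inj_on[OF e] edge_image_subset_S2[OF e]
    by (intro nowhere_dense_S2_injective_image continuous_on_subset[OF continuous_on_edge[OF e]])
      (auto simp: path_image_def)
  then show ?thesis unfolding split by (intro nowhere_dense_S2_Un) (auto simp: subset_eq)
qed

lemma nowhere_dense_S2_G: "nowhere_dense_S2 G"
proof -
  have "nowhere_dense_S2 {pv v}" if "v \<in> V" for v
    using nowhere_dense_S2_injective_image[of "{0}" "\<lambda>_. pv v"] pv_in_S2 that by auto
  then have "nowhere_dense_S2 (\<Union>v\<in>V. {pv v})"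
    using finite_V by (intro nowhere_dense_S2_Union) auto
  moreover have "nowhere_dense_S2 (\<Union>e\<in>E. edge_image e)"
    using finite_E nowhere_dense_S2_edge_image by (intro nowhere_dense_S2_Union) auto
  ultimately show ?thesis unfolding graph_image_eq by (metis nowhere_dense_S2_Un UNION_singleton_eq_range)
qed

lemma openin_S2_not_subset_G:
  "openin (top_of_set S2) U \<Longrightarrow> U \<noteq> {} \<Longrightarrow> \<exists>y\<in>U. y \<notin> G"
  using nowhere_dense_S2_G unfolding nowhere_dense_S2_def by blast

lemma islimpt_S2_minus_G: "x \<in> G \<Longrightarrow> x islimpt (S2 - G)"
  unfolding islimpt_approachable
proof (intro allI impI)
  fix \<epsilon> :: real assume "x \<in> G" "\<epsilon> > 0"
  then have "x \<in> S2" using G_subset_S2 by blast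
  then have "openin (top_of_set S2) (S2 \<inter> ball x \<epsilon>)" "S2 \<inter> ball x \<epsilon> \<noteq> {}"
    using \<open>\<epsilon> > 0\<close> by (auto simp: openin_open_Int)
  then obtain y where "y \<in> S2 \<inter> ball x \<epsilon>" "y \<notin> G" using openin_S2_not_subset_G by blast
  then show "\<exists>y\<in>S2 - G. y \<noteq> x \<and> dist y x < \<epsilon>" using \<open>x \<in> G\<close> by (auto simp: dist_commute)
qed

lemma openin_S2_minus_G: "openin (top_of_set S2) (S2 - G)"
  using closed_G by (metis Diff_eq openin_Int_open open_Compl openin_subtopology_self)

lemma face_openin: "F \<in> Faces \<Longrightarrow> openin (top_of_set S2) F"
proof -
  assume F: "F \<in> Faces"
  have "locally connected S2" unfolding S2_def by (rule locally_connected_sphere)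
  then have "locally connected (S2 - G)"
    using locally_open_subset openin_S2_minus_G by blast
  then have "openin (top_of_set (S2 - G)) F"
    using openin_components_locally_connected F by (simp add: faces_def)
  then show ?thesis using openin_S2_minus_G openin_trans by blast
qed

lemma face_subset: "F \<in> Faces \<Longrightarrow> F \<subseteq> S2 - G"
  by (simp add: faces_def in_components_subset)

lemma face_connected: "F \<in> Faces \<Longrightarrow> connected F"
  by (simp add: faces_def in_components_connected)

lemma face_nonempty: "F \<in> Faces \<Longrightarrow> F \<noteq> {}"
  by (simp add: faces_def in_components_nonempty)

lemma closure_face_subset: "F \<in> Faces \<Longrightarrow> closure F \<subseteq> S2"
  using face_subset closure_minimal S2_closed by (metis Diff_subset subset_trans)

lemma Union_Faces: "\<Union>Faces = S2 - G"
  by (simp add: faces_def Union_components)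

lemma faces_eq: "F \<in> Faces \<Longrightarrow> F' \<in> Faces \<Longrightarrow> F \<inter> F' \<noteq> {} \<Longrightarrow> F = F'"
  by (simp add: faces_def components_eq)

lemma face_closure_point: "F \<in> Faces \<Longrightarrow> y \<in> closure F \<Longrightarrow> y \<in> S2 - G \<Longrightarrow> y \<in> F"
proof -
  assume F: "F \<in> Faces" and y: "y \<in> closure F" "y \<in> S2 - G"
  obtain F' where F': "F' \<in> Faces" "y \<in> F'" using y(2) Union_Faces by blast
  have "F' \<inter> F \<noteq> {}"
    using openin_S2_meets_closure[OF face_openin[OF F'(1)] F'(2) y(1)] face_subset[OF F] by blast
  then show "y \<in> F" using faces_eq[OF F'(1) F] F' by simp
qed

lemma face_boundary_subset_G: "F \<in> Faces \<Longrightarrow> face_boundary F \<subseteq> G"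
  using face_closure_point closure_face_subset unfolding face_boundary_def by blast

lemma closure_face_eq: "closure F = F \<union> face_boundary F"
  unfolding face_boundary_def using closure_subset by blast

lemma islimpt_face_imp_boundary: "F \<in> Faces \<Longrightarrow> x \<in> G \<Longrightarrow> x islimpt F \<Longrightarrow> x \<in> face_boundary F"
  using face_subset unfolding face_boundary_def by (auto simp: closure_def)

lemma face_in_side:
  assumes F: "F \<in> Faces" and J: "J \<subseteq> G"
    and U: "openin (top_of_set S2) U1" "openin (top_of_set S2) U2" "U1 \<inter> U2 = {}" "U1 \<union> U2 = S2 - J"
  shows "F \<subseteq> U1 \<or> F \<subseteq> U2"
proof -
  obtain O1 where O1: "open O1" "U1 = S2 \<inter> O1" using U(1) openin_open by blast
  obtain O2 where O2: "open O2" "U2 = S2 \<inter> O2" using U(2) openin_open by blast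
  have FS2: "F \<subseteq> S2 - G" using face_subset[OF F] .
  have "F \<subseteq> O1 \<union> O2" using FS2 U(4) J O1 O2 by blast
  moreover have "O1 \<inter> O2 \<inter> F = {}" using FS2 U(3) O1 O2 by blast
  ultimately have "O1 \<inter> F = {} \<or> O2 \<inter> F = {}"
    using connectedD[OF face_connected[OF F] O1(1) O2(1)] by blast
  then show ?thesis using FS2 O1 O2 \<open>F \<subseteq> O1 \<union> O2\<close> by blast
qed

lemma face_eq_side:
  assumes F: "F \<in> Faces" and U: "openin (top_of_set S2) U" "connected U" "U \<inter> face_boundary F = {}" "F \<subseteq> U"
  shows "F = U"
proof -
  have "openin (top_of_set U) F"
    using openin_subset_trans[OF face_openin[OF F] U(4)] openin_imp_subset[OF U(1)] by blast
  moreover have "closedin (top_of_set U) F"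
  proof -
    have "U \<inter> closure F = F" using closure_face_eq[of F] U(3,4) by blast
    then show ?thesis using closedin_closed by (metis closed_closure inf_commute)
  qed
  ultimately show ?thesis using U(2) face_nonempty[OF F] unfolding connected_clopen by blast
qed

lemma face_side_of_boundary:
  assumes F: "F \<in> Faces"
    and U: "openin (top_of_set S2) U1" "openin (top_of_set S2) U2" "connected U1" "connected U2"
      "U1 \<inter> U2 = {}" "U1 \<union> U2 = S2 - face_boundary F"
  shows "F = U1 \<or> F = U2"
proof -
  have "F \<subseteq> U1 \<or> F \<subseteq> U2" using face_in_side[OF F face_boundary_subset_G[OF F] U(1,2,5,6)] .
  moreover have "U1 \<inter> face_boundary F = {}" "U2 \<inter> face_boundary F = {}" using U(6) by auto
  ultimately show ?thesis using face_eq_side[OF F U(1,3)] face_eq_side[OF F U(2,4)] by blast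
qed

lemma edges_image_inj:
  assumes "C \<subseteq> E" "C' \<subseteq> E" "edges_image pe C = edges_image pe C'" shows "C = C'"
proof -
  have "C1 \<subseteq> C2" if "C1 \<subseteq> E" "C2 \<subseteq> E" "edges_image pe C1 = edges_image pe C2" for C1 C2
  proof
    fix e assume e: "e \<in> C1"
    then have eE: "e \<in> E" using that by blast
    have "pe e (1/2) \<in> edges_image pe C1"
      using e edge_interior_subset[OF eE] edge_interior_midpoint unfolding edges_image_def by blast
    then have "pe e (1/2) \<in> edges_image pe C2" using that(3) by simp
    then obtain e' where "e' \<in> C2" "pe e (1/2) \<in> edge_image e'" by (auto simp: edges_image_def)
    then show "e \<in> C2" using edge_interior_unique[OF eE edge_interior_midpoint] that(2) by blast
  qed
  then show ?thesis using assms by blast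
qed

lemma edge_local_arc:
  assumes e: "e \<in> E" and t: "0 < t" "t < 1"
  obtains a b r where "0 < a" "a < t" "t < b" "b < 1" "r > 0" "ball (pe e t) r \<inter> G \<subseteq> pe e ` {a..b}"
proof -
  define a where "a = t/2"
  define b where "b = (t+1)/2"
  have ab: "0 < a" "a < t" "t < b" "b < 1" using t by (auto simp: a_def b_def)
  have x: "pe e t \<in> edge_interior e" using t by (simp add: edge_interior_def)
  obtain r1 where r1: "r1 > 0" "ball (pe e t) r1 \<inter> G \<subseteq> edge_interior e"
    using edge_interior_isolated[OF e x] by blast
  define K where "K = pe e ` ({0..a} \<union> {b..1})"
  have "compact K" unfolding K_def
    by (rule compact_continuous_image[OF continuous_on_subset[OF continuous_on_edge[OF e]]]) (use ab in auto)
  moreover have "pe e t \<notin> K"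
  proof
    assume "pe e t \<in> K"
    then obtain s where s: "s \<in> {0..a} \<union> {b..1}" "pe e s = pe e t" unfolding K_def by (metis imageE)
    moreover have "s \<in> {0..1}" "t \<in> {0..1}" using s(1) ab by auto
    ultimately have "s = t \<or> s = 0 \<and> t = 1 \<or> s = 1 \<and> t = 0"
      using simple_path_edge[OF e] unfolding simple_path_def loop_free_def by blast
    then show False using s(1) ab by auto
  qed
  ultimately obtain r2 where r2: "r2 > 0" "ball (pe e t) r2 \<subseteq> - K"
    using compact_imp_closed open_contains_ball by (metis open_Compl ComplI)
  have sub: "ball (pe e t) (min r1 r2) \<inter> G \<subseteq> pe e ` {a..b}"
  proof
    fix z assume z: "z \<in> ball (pe e t) (min r1 r2) \<inter> G"
    then have "z \<in> edge_interior e" using r1 by auto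
    then obtain s where s: "s \<in> {0<..<1}" "z = pe e s" by (auto simp: edge_interior_def)
    moreover have "z \<notin> K" using z r2 by auto
    ultimately have "s \<in> {a..b}" by (auto simp: K_def)
    then show "z \<in> pe e ` {a..b}" using s by blast
  qed
  show ?thesis by (rule that[OF ab _ sub]) (simp add: r1(1) r2(1))
qed

text \<open>The parameters of the edge lying on the circle form a nonempty subset of the open unit
  interval that is closed and, by invariance of domain, open.\<close>

lemma circle_in_G_contains_edge:
  assumes J: "J \<subseteq> G" "J homeomorphic sphere (0::complex) 1" and e: "e \<in> E"
    and meet: "edge_interior e \<inter> J \<noteq> {}"
  shows "edge_image e \<subseteq> J"
proof -
  have "compact J" using J(2) homeomorphic_compactness compact_sphere by blast
  then have "closed J" by (rule compact_imp_closed)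
  define T where "T = {0<..<1} \<inter> pe e -` J"
  have "closedin (top_of_set {0<..<1}) T"
    unfolding T_def
    by (rule continuous_closedin_preimage[OF continuous_on_subset[OF continuous_on_edge[OF e]] \<open>closed J\<close>]) auto
  moreover have "open T"
    unfolding open_contains_ball
  proof
    fix t assume "t \<in> T"
    then have t: "0 < t" "t < 1" "pe e t \<in> J" by (auto simp: T_def)
    obtain a b r where ab: "0 < a" "a < t" "t < b" "b < 1" "r > 0"
      and near: "ball (pe e t) r \<inter> G \<subseteq> pe e ` {a..b}"
      using edge_local_arc[OF e t(1,2)] by blast
    have "inj_on (pe e) {a..b}" using edge_inj_on[OF e] ab by auto
    moreover have "continuous_on {a..b} (pe e)"
      using continuous_on_subset[OF continuous_on_edge[OF e]] ab by auto
    ultimately obtain g where g: "homeomorphism {a..b} (pe e ` {a..b}) (pe e) g"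
      using homeomorphism_compact[OF compact_Icc] by blast
    have "ball (pe e t) r \<inter> J \<subseteq> pe e ` {a..b}" using near J(1) by blast
    moreover have "t \<in> {a..b}" using ab by simp
    ultimately obtain \<epsilon> where \<epsilon>: "\<epsilon> > 0" "ball t \<epsilon> \<subseteq> pe e -` J"
      using arc_preimage_circle_locally_open[OF g J(2) _ t(3) ab(5)] by blast
    have "ball t (min \<epsilon> (min t (1 - t))) \<subseteq> T"
      using \<epsilon> by (auto simp: T_def dist_real_def)
    then show "\<exists>\<epsilon>>0. ball t \<epsilon> \<subseteq> T" using \<epsilon>(1) t(1,2) by (metis diff_gt_0_iff_gt min_def)
  qed
  then have "openin (top_of_set {0<..<1}) T" by (rule open_subset[rotated]) (auto simp: T_def)
  moreover have "T \<noteq> {}" using meet by (auto simp: T_def edge_interior_def)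
  ultimately have "T = {0<..<1}" using connected_Ioo[of 0 1] unfolding connected_clopen by blast
  then have "edge_interior e \<subseteq> J" by (auto simp: T_def edge_interior_def)
  then show ?thesis
    using edge_image_subset_closure_interior[OF e] closure_minimal[OF _ \<open>closed J\<close>] by blast
qed

lemma circle_in_G_eq_edges_image:
  assumes J: "J \<subseteq> G" "J homeomorphic sphere (0::complex) 1"
  shows "J = edges_image pe {e\<in>E. edge_image e \<subseteq> J}"
proof
  show "edges_image pe {e\<in>E. edge_image e \<subseteq> J} \<subseteq> J" by (auto simp: edges_image_def)
  show "J \<subseteq> edges_image pe {e\<in>E. edge_image e \<subseteq> J}"
  proof
    fix y assume yJ: "y \<in> J"
    have "connected J"
      using homeomorphic_connectedness[OF J(2)] connected_sphere[of "0::complex" 1] by simp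
    moreover have "\<not> J \<subseteq> {y}"
    proof
      assume "J \<subseteq> {y}"
      moreover obtain c where "simple_path c" "path_image c = J"
        using homeomorphic_circle_simple_loop[OF J(2)] by blast
      then have "uncountable J" using simple_path_image_uncountable by blast
      ultimately show False using countable_finite finite_subset by blast
    qed
    ultimately have "y islimpt J" using yJ connected_imp_perfect by blast
    then have "y islimpt (J - pv ` V)"
      using islimpt_finite[OF finite_imageI[OF finite_V]] islimpt_Un islimpt_subset
      by (metis Diff_partition Un_Diff_cancel sup_ge2)
    moreover have "J - pv ` V \<subseteq> (\<Union>e\<in>E. edge_interior e \<inter> J)" using J(1) G_cases by blast
    ultimately have "y islimpt (\<Union>e\<in>E. edge_interior e \<inter> J)" using islimpt_subset by blast
    then obtain e where e: "e \<in> E" "y islimpt (edge_interior e \<inter> J)"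
      using islimpt_UN_finite finite_E by blast
    then have "edge_image e \<subseteq> J"
      using circle_in_G_contains_edge[OF J e(1)] by (metis islimpt_EMPTY)
    moreover have "y islimpt edge_image e" using e(2) edge_interior_subset[OF e(1)] islimpt_subset by blast
    then have "y \<in> edge_image e"
      using closed_limpt closed_simple_path_image simple_path_edge[OF e(1)] by blast
    ultimately show "y \<in> edges_image pe {e\<in>E. edge_image e \<subseteq> J}" using e(1) by (auto simp: edges_image_def)
  qed
qed

definition edge_path_from :: "'e \<Rightarrow> 'v \<Rightarrow> real \<Rightarrow> real^3" where
  "edge_path_from e v = (if src e = v then pe e else reversepath (pe e))"

lemma edge_path_from:
  assumes e: "e \<in> E" and ends: "{src e, tgt e} = {v, u}"
  shows "pathstart (edge_path_from e v) = pv v" "pathfinish (edge_path_from e v) = pv u"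
    "path_image (edge_path_from e v) = edge_image e" "simple_path (edge_path_from e v)"
proof -
  have "(src e = v \<and> tgt e = u) \<or> (src e \<noteq> v \<and> src e = u \<and> tgt e = v)"
    using ends by (auto simp: doubleton_eq_iff)
  then show "pathstart (edge_path_from e v) = pv v" "pathfinish (edge_path_from e v) = pv u"
    using pathstart_edge[OF e] pathfinish_edge[OF e] by (auto simp: edge_path_from_def)
  show "path_image (edge_path_from e v) = edge_image e" by (simp add: edge_path_from_def)
  show "simple_path (edge_path_from e v)"
    using simple_path_edge[OF e] by (simp add: edge_path_from_def simple_path_reversepath)
qed

lemma arc_edge_path_from:
  assumes e: "e \<in> E" and ends: "{src e, tgt e} = {v, u}" and "v \<noteq> u"
  shows "arc (edge_path_from e v)"
proof -
  have "v \<in> V" "u \<in> V" using ends src_in_V[OF e] tgt_in_V[OF e] by (auto simp: doubleton_eq_iff)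
  then have "pv v \<noteq> pv u" using \<open>v \<noteq> u\<close> inj_on_pv by (auto simp: inj_on_def)
  then show ?thesis using edge_path_from[OF e ends] by (simp add: arc_simple_path)
qed

lemma edge_image_meets_walk_edges:
  assumes "e \<in> E" "set es \<subseteq> E" "e \<notin> set es"
  shows "edge_image e \<inter> edges_image pe (set es) \<subseteq> pv ` {src e, tgt e}"
  unfolding edges_image_def using edge_images_meet_at_ends[OF assms(1)] assms(2,3) by blast

lemma vertex_on_walk_edges:
  assumes "walk src tgt E vs es" "v \<in> V" "pv v \<in> edges_image pe (set es)"
  shows "v \<in> set vs"
proof -
  obtain e where e: "e \<in> set es" "pv v \<in> edge_image e" using assms(3) by (auto simp: edges_image_def)
  then have "e \<in> E" using walk_edges_subset[OF assms(1)] by blast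
  then have "v = src e \<or> v = tgt e" using vertex_on_edge_imp_end e(2) assms(2) by blast
  then show ?thesis using walk_endpoints_in_vertices[OF assms(1) e(1)] by auto
qed

lemma path_walk_arc:
  "path_walk src tgt E vs es \<Longrightarrow> \<exists>P. arc P \<and> pathstart P = pv (hd vs) \<and> pathfinish P = pv (last vs)
     \<and> path_image P = edges_image pe (set es)"
proof (induction es arbitrary: vs)
  case Nil then show ?case by (simp add: path_walk_def)
next
  case (Cons e es')
  obtain v vs' where vs: "vs = v # vs'" using Cons.prems by (cases vs) (auto simp: path_walk_def walk_def)
  have eE: "e \<in> E" and ends: "{src e, tgt e} = {v, hd vs'}" and w': "walk src tgt E vs' es'"
    and vs'ne: "vs' \<noteq> []"
    using Cons.prems vs by (auto simp: path_walk_def walk_Cons_Cons)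
  have vnot: "v \<notin> set vs'" and dvs': "distinct vs'" and des': "distinct es'" and ees': "e \<notin> set es'"
    using Cons.prems vs by (auto simp: path_walk_def)
  have "v \<noteq> hd vs'" using vnot vs'ne by (metis list.set_sel(1))
  note arc1 = arc_edge_path_from[OF eE ends this] and ep = edge_path_from[OF eE ends]
  show ?case
  proof (cases "es' = []")
    case True
    then have "vs' = [hd vs']" using w' vs'ne by (cases vs') (auto simp: walk_def)
    then show ?thesis using arc1 ep True vs
      by (intro exI[of _ "edge_path_from e v"]) (auto simp: edges_image_def, metis last.simps list.discI)
  next
    case False
    then obtain P' where P': "arc P'" "pathstart P' = pv (hd vs')" "pathfinish P' = pv (last vs')"
      "path_image P' = edges_image pe (set es')"
      using Cons.IH w' dvs' des' by (auto simp: path_walk_def)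
    have "path_image (edge_path_from e v) \<inter> path_image P' \<subseteq> {pathstart P'}"
    proof
      fix y assume y: "y \<in> path_image (edge_path_from e v) \<inter> path_image P'"
      then have "y \<in> pv ` {src e, tgt e}"
        using edge_image_meets_walk_edges[OF eE walk_edges_subset[OF w'] ees'] ep(3) P'(4) by blast
      then have "y = pv v \<or> y = pv (hd vs')" using ends by auto
      moreover have "v \<in> V" using ends src_in_V[OF eE] tgt_in_V[OF eE] by (auto simp: doubleton_eq_iff)
      then have "y \<noteq> pv v" using vertex_on_walk_edges[OF w'] vnot y P'(4) by blast
      ultimately show "y \<in> {pathstart P'}" using P'(2) by simp
    qed
    then have "arc (edge_path_from e v +++ P')" using arc_join[OF arc1 P'(1)] ep P' by simp
    moreover have "path_image (edge_path_from e v +++ P') = edges_image pe (set (e # es'))"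
      using path_image_join[of "edge_path_from e v" P'] ep P' by (auto simp: edges_image_def)
    ultimately show ?thesis using ep P' vs vs'ne by (intro exI[of _ "edge_path_from e v +++ P'"]) simp
  qed
qed

lemma cycle_walk_simple_loop:
  assumes "cycle_walk src tgt E vs es"
  obtains c where "simple_path c" "pathfinish c = pathstart c" "path_image c = edges_image pe (set es)"
proof -
  have w: "walk src tgt E vs es" and hl: "hd vs = last vs" and dv: "distinct (tl vs)" and de: "distinct es"
    and ne: "es \<noteq> []"
    using assms by (auto simp: cycle_walk_def)
  obtain e es' where es: "es = e # es'" using ne by (cases es) auto
  obtain v vs' where vs: "vs = v # vs'" using w by (cases vs) (auto simp: walk_def)
  have eE: "e \<in> E" and vs'ne: "vs' \<noteq> []" and ends: "{src e, tgt e} = {v, hd vs'}"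
    and w': "walk src tgt E vs' es'"
    using w vs es by (auto simp: walk_Cons_Cons)
  have lastv: "last vs' = v" using hl vs vs'ne by simp
  show ?thesis
  proof (cases "es' = []")
    case True
    then have "vs' = [hd vs']" using w' vs'ne by (cases vs') (auto simp: walk_def)
    then have "hd vs' = v" using lastv by (metis last_ConsL)
    then have "src e = v" "tgt e = v" using ends by auto
    then show ?thesis
      using that simple_path_edge[OF eE] pathstart_edge[OF eE] pathfinish_edge[OF eE] es True
      by (simp add: edges_image_def)
  next
    case False
    have pw': "path_walk src tgt E vs' es'" using w' False dv de vs es by (simp add: path_walk_def)
    then have "hd vs' \<noteq> v" using path_walk_hd_ne_last lastv by metis
    then have arc1: "arc (edge_path_from e v)" using arc_edge_path_from[OF eE ends] by metis
    note ep = edge_path_from[OF eE ends]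
    obtain P' where P': "arc P'" "pathstart P' = pv (hd vs')" "pathfinish P' = pv v"
      "path_image P' = edges_image pe (set es')"
      using path_walk_arc[OF pw'] lastv by auto
    have "path_image (edge_path_from e v) \<inter> path_image P' \<subseteq> {pathstart (edge_path_from e v), pathstart P'}"
      using edge_image_meets_walk_edges[OF eE walk_edges_subset[OF w']] de es ep P' ends by simp
    then have "simple_path (edge_path_from e v +++ P')"
      using simple_path_join_loop[OF arc1 P'(1)] ep P' by simp
    moreover have "path_image (edge_path_from e v +++ P') = edges_image pe (set es)"
      using path_image_join[of "edge_path_from e v" P'] ep P' es by (auto simp: edges_image_def)
    moreover have "pathfinish (edge_path_from e v +++ P') = pathstart (edge_path_from e v +++ P')"
      using ep P' by simp
    ultimately show ?thesis using that by blast
  qed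
qed

text \<open>The loop separates S2, and the face would meet both sides.\<close>

lemma graph_loop_avoids_face_cell:
  assumes F: "F \<in> Faces" and W: "openin (top_of_set S2) W" "W - G \<subseteq> F"
    and c: "simple_path c" "pathfinish c = pathstart c" "path_image c \<subseteq> G"
  shows "path_image c \<inter> W = {}"
proof (rule ccontr)
  assume "path_image c \<inter> W \<noteq> {}"
  then obtain z where z: "z \<in> path_image c" "z \<in> W" by blast
  obtain U1 U2 where U: "openin (top_of_set S2) U1" "openin (top_of_set S2) U2"
    "U1 \<inter> U2 = {}" "U1 \<union> U2 = S2 - path_image c"
    "path_image c \<subseteq> closure U1" "path_image c \<subseteq> closure U2"
    using Jordan_curve_S2[OF c(1,2)] c(3) G_subset_S2 by (metis subset_trans)
  have side: "F \<inter> U \<noteq> {}" if "openin (top_of_set S2) U" "path_image c \<subseteq> closure U" "U \<subseteq> S2" for U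
  proof -
    have "W \<inter> U \<noteq> {}" using openin_S2_meets_closure[OF W(1) z(2) _ that(3)] that(2) z(1) by blast
    moreover have "openin (top_of_set S2) (W \<inter> U)" using W(1) that(1) by (rule openin_Int)
    ultimately obtain p where "p \<in> W \<inter> U" "p \<notin> G" using openin_S2_not_subset_G by blast
    then show ?thesis using W(2) by blast
  qed
  have "F \<inter> U1 \<noteq> {}" "F \<inter> U2 \<noteq> {}" using side U by auto
  moreover have "F \<subseteq> U1 \<or> F \<subseteq> U2" using face_in_side[OF F c(3) U(1-4)] .
  ultimately show False using U(3) by blast
qed

end

section \<open>Faces bounded by an embedded disc\<close>

locale cellular_face = embedded_graph +
  fixes F :: "(real^3) set" and h :: "complex \<Rightarrow> real^3" and k :: "real^3 \<Rightarrow> complex"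
  assumes face: "F \<in> Faces" and disc: "homeomorphism (cball 0 1) (closure F) h k"
begin

abbreviation "cell \<equiv> h ` ball 0 1"
abbreviation "rim \<equiv> h ` sphere 0 1"

definition cell_edges where
  "cell_edges = {e\<in>E. edge_interior e \<inter> cell \<noteq> {}}"

definition rim_vertices where
  "rim_vertices = {v\<in>V. pv v \<in> rim}"

lemma closure_face_ne_S2: "closure F \<noteq> S2"
proof
  assume "closure F = S2"
  then have "contractible S2"
    using disc homeomorphic_contractible_eq convex_imp_contractible convex_cball
    by (metis homeomorphic_def)
  then show False by (simp add: S2_def contractible_sphere)
qed

lemma cell_openin: "openin (top_of_set S2) cell"
  and face_subset_cell: "F \<subseteq> cell"
  using embedded_disc_interior[OF disc closure_face_subset[OF face] closure_face_ne_S2]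
    face_openin[OF face] closure_subset by auto

lemma cell_minus_G_subset_face: "cell - G \<subseteq> F"
proof -
  have "cell \<subseteq> closure F" using disc by (auto simp: homeomorphism_def)
  then show ?thesis using face_closure_point[OF face] cell_openin openin_imp_subset by blast
qed

lemma cell_rim_disjoint: "cell \<inter> rim = {}"
  and closure_face_cell_rim: "closure F = cell \<union> rim"
proof -
  have inj: "inj_on h (cball 0 1)" using disc by (metis homeomorphism_def inj_on_inverseI)
  show "cell \<inter> rim = {}"
  proof (rule ccontr)
    assume "cell \<inter> rim \<noteq> {}"
    then obtain x y where xy: "x \<in> ball 0 1" "y \<in> sphere 0 1" "h x = h y" by blast
    then have "x = y" using inj_onD[OF inj xy(3)] by auto
    then show False using xy(1,2) by simp
  qed
  have "cball (0::complex) 1 = ball 0 1 \<union> sphere 0 1" by auto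
  then show "closure F = cell \<union> rim" using disc by (auto simp: homeomorphism_def)
qed

lemma rim_circle: "rim homeomorphic sphere (0::complex) 1"
  using homeomorphism_cball_sphere_image[OF disc] .

lemma rim_subset_G: "rim \<subseteq> G"
proof -
  have "rim \<subseteq> face_boundary F"
    using closure_face_cell_rim cell_rim_disjoint face_subset_cell unfolding face_boundary_def by blast
  then show ?thesis using face_boundary_subset_G[OF face] by blast
qed

lemma cell_edges_subset: "cell_edges \<subseteq> E"
  by (auto simp: cell_edges_def)

text \<open>A rim point in the interior of the edge would put the whole edge on the rim, so the
  connected edge interior cannot leave the cell.\<close>

lemma cell_edge_interior_subset: "e \<in> cell_edges \<Longrightarrow> edge_interior e \<subseteq> cell"
proof -
  assume eH: "e \<in> cell_edges"
  then have e: "e \<in> E" and meet: "edge_interior e \<inter> cell \<noteq> {}" by (auto simp: cell_edges_def)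
  have "edge_interior e \<inter> rim = {}"
  proof (rule ccontr)
    assume "edge_interior e \<inter> rim \<noteq> {}"
    then have "edge_interior e \<subseteq> rim"
      using circle_in_G_contains_edge[OF rim_subset_G rim_circle e] edge_interior_subset[OF e] by blast
    then show False using meet cell_rim_disjoint by blast
  qed
  obtain O1 where O1: "open O1" "cell = S2 \<inter> O1" using cell_openin openin_open by blast
  have S: "edge_interior e \<subseteq> S2" using edge_interior_subset[OF e] edge_image_subset_S2[OF e] by blast
  have cover: "edge_interior e \<subseteq> O1 \<union> - closure F"
  proof
    fix x assume x: "x \<in> edge_interior e"
    show "x \<in> O1 \<union> - closure F"
    proof (cases "x \<in> closure F")
      case True
      then have "x \<in> cell" using x \<open>edge_interior e \<inter> rim = {}\<close> closure_face_cell_rim by blast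
      then show ?thesis using O1(2) by blast
    qed simp
  qed
  have "O1 \<inter> - closure F \<inter> edge_interior e = {}"
  proof -
    have "x \<in> closure F" if "x \<in> O1" "x \<in> edge_interior e" for x
      using that S O1(2) closure_face_cell_rim by blast
    then show ?thesis by blast
  qed
  then have "O1 \<inter> edge_interior e = {} \<or> - closure F \<inter> edge_interior e = {}"
    using connectedD[OF connected_edge_interior[OF e] O1(1) open_Compl[OF closed_closure] _ cover] by blast
  moreover have "O1 \<inter> edge_interior e \<noteq> {}" using meet O1(2) by blast
  ultimately have "edge_interior e \<subseteq> O1" using cover by blast
  then show ?thesis using S O1(2) by blast
qed

lemma cell_edge_ends: "e \<in> cell_edges \<Longrightarrow> pv (src e) \<in> closure F \<and> pv (tgt e) \<in> closure F"
proof -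
  assume eH: "e \<in> cell_edges"
  then have "edge_interior e \<subseteq> closure F"
    using cell_edge_interior_subset closure_face_cell_rim by blast
  then have "edge_image e \<subseteq> closure F"
    using edge_image_subset_closure_interior cell_edges_subset eH closure_minimal closed_closure
    by (metis subset_iff subset_trans)
  then show ?thesis using edge_image_eq cell_edges_subset eH by auto
qed

lemma edge_at_cell_vertex_in_cell_edges:
  assumes v: "pv v \<in> cell" and e: "e \<in> E" "src e = v \<or> tgt e = v"
  shows "e \<in> cell_edges"
proof -
  obtain O1 where O1: "open O1" "cell = S2 \<inter> O1" using cell_openin openin_open by blast
  then have "edge_interior e \<inter> O1 \<noteq> {}"
    using edge_interior_meets_open_at_end[OF e(1) O1(1)] v e(2) by auto
  moreover have "edge_interior e \<subseteq> S2" using edge_interior_subset[OF e(1)] edge_image_subset_S2[OF e(1)] by blast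
  ultimately show ?thesis using e(1) O1(2) by (auto simp: cell_edges_def)
qed

lemma cell_edges_degree:
  assumes "v \<notin> rim_vertices" "\<exists>e\<in>cell_edges. src e = v \<or> tgt e = v"
  shows "2 \<le> card {e\<in>cell_edges. src e = v} + card {e\<in>cell_edges. tgt e = v}"
proof -
  obtain e where e: "e \<in> cell_edges" "src e = v \<or> tgt e = v" using assms(2) by blast
  then have "v \<in> V" using cell_edges_subset src_in_V tgt_in_V by blast
  moreover have "pv v \<in> closure F" using cell_edge_ends[OF e(1)] e(2) by auto
  ultimately have "pv v \<in> cell" using assms(1) closure_face_cell_rim by (auto simp: rim_vertices_def)
  then have "{e\<in>cell_edges. src e = v} = {e\<in>E. src e = v}" "{e\<in>cell_edges. tgt e = v} = {e\<in>E. tgt e = v}"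
    using edge_at_cell_vertex_in_cell_edges cell_edges_subset by auto
  then show ?thesis using degree_ge_2[OF \<open>v \<in> V\<close>] by simp
qed

lemma graph_loop_misses_cell_edges:
  assumes c: "simple_path c" "pathfinish c = pathstart c" "path_image c \<subseteq> G"
    and e: "e \<in> cell_edges" "edge_image e \<subseteq> path_image c"
  shows False
proof -
  have "edge_interior e \<inter> cell \<noteq> {}" using e(1) by (simp add: cell_edges_def)
  moreover have "edge_interior e \<subseteq> path_image c" using e cell_edges_subset edge_interior_subset by blast
  ultimately show False
    using graph_loop_avoids_face_cell[OF face cell_openin cell_minus_G_subset_face c] by blast
qed

lemma rim_arc:
  assumes "a \<in> rim" "b \<in> rim" "a \<noteq> b"
  obtains d where "arc d" "pathstart d = a" "pathfinish d = b" "path_image d \<subseteq> rim"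
proof -
  obtain cB where cB: "simple_path cB" "pathfinish cB = pathstart cB" "path_image cB = rim"
    using homeomorphic_circle_simple_loop[OF rim_circle] by blast
  then obtain u d where "arc d" "pathstart d = a" "pathfinish d = b"
      "path_image u \<union> path_image d = path_image cB"
    using exists_double_arc[OF cB(1,2), of b a] assms by metis
  then show ?thesis using that cB(3) by blast
qed

lemma path_walk_between_meets_rim:
  assumes pb: "path_walk_between src tgt cell_edges rim_vertices vs es"
  shows "edges_image pe (set es) \<inter> rim \<subseteq> {pv (hd vs), pv (last vs)}"
proof
  have pw: "path_walk src tgt cell_edges vs es" and inner: "\<forall>x\<in>set (butlast (tl vs)). x \<notin> rim_vertices"
    using pb by (auto simp: path_walk_between_def)
  then have w: "walk src tgt cell_edges vs es" by (simp add: path_walk_def)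
  fix y assume y: "y \<in> edges_image pe (set es) \<inter> rim"
  then obtain e where e: "e \<in> set es" "y \<in> edge_image e" by (auto simp: edges_image_def)
  have eH: "e \<in> cell_edges" using e walk_edges_subset[OF w] by blast
  then have eE: "e \<in> E" using cell_edges_subset by blast
  have "y \<notin> edge_interior e" using y cell_edge_interior_subset[OF eH] cell_rim_disjoint by blast
  then obtain x where x: "x \<in> {src e, tgt e}" "y = pv x" using edge_image_eq[OF eE] e(2) by auto
  then have "x \<in> set vs" "x \<in> V"
    using walk_endpoints_in_vertices[OF w e(1)] src_in_V[OF eE] tgt_in_V[OF eE] by auto
  moreover have "x \<in> rim_vertices" using x y \<open>x \<in> V\<close> by (auto simp: rim_vertices_def)
  ultimately have "x = hd vs \<or> x = last vs"
    using inner set_butlast_tl[of vs] pw by (cases es) (auto simp: path_walk_def walk_def)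
  then show "y \<in> {pv (hd vs), pv (last vs)}" using x by auto
qed

text \<open>The loop is the path followed by an arc of the rim back to its start.\<close>

lemma rim_path_closes_to_loop:
  assumes pb: "path_walk_between src tgt cell_edges rim_vertices vs es"
  obtains c where "simple_path c" "pathfinish c = pathstart c" "path_image c \<subseteq> G"
    "edges_image pe (set es) \<subseteq> path_image c"
proof -
  have pw: "path_walk src tgt cell_edges vs es" and ends: "hd vs \<in> rim_vertices" "last vs \<in> rim_vertices"
    using pb by (auto simp: path_walk_between_def)
  have esH: "set es \<subseteq> cell_edges" using walk_edges_subset pw by (metis path_walk_def)
  obtain P where P: "arc P" "pathstart P = pv (hd vs)" "pathfinish P = pv (last vs)"
    "path_image P = edges_image pe (set es)"
    using path_walk_arc pw walk_mono[OF cell_edges_subset] by (metis path_walk_def)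
  have "pv (last vs) \<noteq> pv (hd vs)"
    using path_walk_hd_ne_last[OF pw] ends inj_on_pv by (auto simp: rim_vertices_def inj_on_def)
  moreover have "pv (last vs) \<in> rim" "pv (hd vs) \<in> rim" using ends by (auto simp: rim_vertices_def)
  ultimately obtain d where d: "arc d" "pathstart d = pv (last vs)" "pathfinish d = pv (hd vs)"
      "path_image d \<subseteq> rim"
    using rim_arc by metis
  have "path_image P \<inter> path_image d \<subseteq> {pathstart P, pathstart d}"
    using path_walk_between_meets_rim[OF pb] P(2,4) d(2,4) by auto
  then have "simple_path (P +++ d)" using simple_path_join_loop[OF P(1) d(1)] P d by simp
  moreover have "pathfinish (P +++ d) = pathstart (P +++ d)" using P d by simp
  moreover have img: "path_image (P +++ d) = path_image P \<union> path_image d"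
    by (rule path_image_join) (simp add: P(3) d(2))
  moreover have "path_image P \<subseteq> G"
    using P(4) esH cell_edges_subset by (auto simp: graph_image_eq edges_image_def)
  then have "path_image (P +++ d) \<subseteq> G" using img d(4) rim_subset_G by blast
  moreover have "edges_image pe (set es) \<subseteq> path_image (P +++ d)" using img P(4) by blast
  ultimately show ?thesis using that by blast
qed

lemma cell_edges_nonempty: "cell \<inter> G \<noteq> {} \<Longrightarrow> cell_edges \<noteq> {}"
proof -
  assume "cell \<inter> G \<noteq> {}"
  then obtain z where z: "z \<in> cell" "z \<in> G" by blast
  consider v where "v \<in> V" "z = pv v" | e where "e \<in> E" "z \<in> edge_interior e"
    using G_cases[OF z(2)] by blast
  then show ?thesis
  proof cases
    case 1
    then have "{e\<in>E. src e = v} \<noteq> {} \<or> {e\<in>E. tgt e = v} \<noteq> {}"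
      using degree_ge_2[of v] by (metis add_0 card.empty not_numeral_le_zero)
    then show ?thesis using edge_at_cell_vertex_in_cell_edges 1 z(1) by blast
  next
    case 2 then show ?thesis using z(1) by (auto simp: cell_edges_def)
  qed
qed

text \<open>Otherwise the edges entering the cell form a nonempty subgraph in which every vertex off
  the rim has degree at least two; it contains a cycle or a path joining two rim vertices, and
  either yields a loop in the graph through the cell.\<close>

lemma cell_disjoint_G: "cell \<inter> G = {}"
proof (rule ccontr)
  assume "cell \<inter> G \<noteq> {}"
  then have "cell_edges \<noteq> {}" by (rule cell_edges_nonempty)
  moreover have "finite cell_edges" using finite_E cell_edges_subset finite_subset by blast
  ultimately have "(\<exists>vs es. cycle_walk src tgt cell_edges vs es) \<or>
      (\<exists>vs es. path_walk_between src tgt cell_edges rim_vertices vs es)"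
    using cycle_walk_or_path_walk_between[OF _ _ cell_edges_degree] by blast
  then consider (cycle) vs es where "cycle_walk src tgt cell_edges vs es"
    | (path) vs es where "path_walk_between src tgt cell_edges rim_vertices vs es"
    by blast
  then obtain c es where c: "simple_path c" "pathfinish c = pathstart c" "path_image c \<subseteq> G"
      "edges_image pe (set es) \<subseteq> path_image c" and es: "es \<noteq> []" "set es \<subseteq> cell_edges"
  proof cases
    case cycle
    then have es: "es \<noteq> []" "set es \<subseteq> cell_edges"
      using walk_edges_subset[of src tgt cell_edges vs es] by (auto simp: cycle_walk_def)
    have "cycle_walk src tgt E vs es"
      using cycle walk_mono[OF cell_edges_subset, of src tgt vs es] unfolding cycle_walk_def by blast
    then obtain c where c: "simple_path c" "pathfinish c = pathstart c"
        "path_image c = edges_image pe (set es)"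
      using cycle_walk_simple_loop by blast
    moreover have "path_image c \<subseteq> G"
      using c(3) es cell_edges_subset unfolding graph_image_eq edges_image_def by blast
    ultimately show thesis using that[OF c(1,2) _ _ es] by simp
  next
    case path
    then have "es \<noteq> []" "set es \<subseteq> cell_edges"
      using walk_edges_subset[of src tgt cell_edges vs es] by (auto simp: path_walk_between_def path_walk_def)
    then show thesis using rim_path_closes_to_loop[OF path] that by metis
  qed
  then obtain e where "e \<in> set es" by (cases es) auto
  then show False
    using graph_loop_misses_cell_edges[OF c(1-3)] c(4) es(2) by (auto simp: edges_image_def)
qed

lemma face_boundary_eq_rim: "face_boundary F = rim"
proof -
  have "F = cell" using face_subset_cell cell_minus_G_subset_face cell_disjoint_G by blast
  then show ?thesis
    using closure_face_cell_rim cell_rim_disjoint unfolding face_boundary_def by blast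
qed

end

lemma (in embedded_graph) cellular_face_boundary:
  assumes "F \<in> Faces" "closure F homeomorphic cball (0::complex) 1"
  shows "face_boundary F homeomorphic sphere (0::complex) 1" "face_boundary F \<subseteq> G"
proof -
  obtain h k where "homeomorphism (cball (0::complex) 1) (closure F) h k"
    using assms(2) homeomorphic_sym unfolding homeomorphic_def by blast
  then interpret cellular_face V E src tgt pv pe F h k
    using assms(1) by unfold_locales
  show "face_boundary F homeomorphic sphere (0::complex) 1" "face_boundary F \<subseteq> G"
    using face_boundary_eq_rim rim_circle rim_subset_G by simp_all
qed

section \<open>Boundary cycles of a cellular embedding\<close>

locale cellular_embedding = embedded_graph +
  assumes cellular: "is_cellular V E pv pe"
    and not_circle: "\<not> (graph_image V E pv pe homeomorphic sphere (0::complex) 1)"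
begin

definition boundary_edges where
  "boundary_edges F = {e\<in>E. edge_image e \<subseteq> face_boundary F}"

lemma face_boundary_circle: "F \<in> Faces \<Longrightarrow> face_boundary F homeomorphic sphere (0::complex) 1"
  using cellular_face_boundary cellular unfolding is_cellular_def by blast

lemma face_boundary_eq_edges_image: "F \<in> Faces \<Longrightarrow> face_boundary F = edges_image pe (boundary_edges F)"
  unfolding boundary_edges_def
  using circle_in_G_eq_edges_image face_boundary_subset_G face_boundary_circle by blast

lemma boundary_edges_subset: "boundary_edges F \<subseteq> E"
  by (auto simp: boundary_edges_def)

lemma boundary_edges_in_cycles_through:
  "F \<in> Faces \<Longrightarrow> e \<in> boundary_edges F \<Longrightarrow> boundary_edges F \<in> cycles_through E pe e"
  using boundary_edges_subset face_boundary_circle face_boundary_eq_edges_image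
  by (auto simp: cycles_through_def cycles_def is_cycle_def)

lemma face_boundary_eq_edges_image_iff:
  "F \<in> Faces \<Longrightarrow> C \<subseteq> E \<Longrightarrow> face_boundary F = edges_image pe C \<longleftrightarrow> C = boundary_edges F"
  using edges_image_inj[OF _ boundary_edges_subset] face_boundary_eq_edges_image by metis

lemma edge_in_boundary_edges:
  assumes "F \<in> Faces" "e \<in> E" "x \<in> edge_interior e" "x \<in> face_boundary F"
  shows "e \<in> boundary_edges F"
proof -
  obtain e' where "e' \<in> boundary_edges F" "x \<in> edge_image e'"
    using face_boundary_eq_edges_image[OF assms(1)] assms(4) by (auto simp: edges_image_def)
  moreover have "e' \<in> E" using calculation(1) boundary_edges_subset by blast
  ultimately show ?thesis using edge_interior_unique[OF assms(2,3)] by blast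
qed

text \<open>If two faces had the same boundary circle, they would be the two sides of it given by
  the Jordan curve theorem, and the graph would be that circle.\<close>

lemma face_boundary_inj:
  assumes F1: "F1 \<in> Faces" and F2: "F2 \<in> Faces" and "F1 \<noteq> F2"
  shows "face_boundary F1 \<noteq> face_boundary F2"
proof
  assume eq: "face_boundary F1 = face_boundary F2"
  obtain c where c: "simple_path c" "pathfinish c = pathstart c" "path_image c = face_boundary F1"
    using homeomorphic_circle_simple_loop[OF face_boundary_circle[OF F1]] by blast
  obtain U1 U2 where U: "openin (top_of_set S2) U1" "openin (top_of_set S2) U2"
    "connected U1" "connected U2" "U1 \<inter> U2 = {}" "U1 \<union> U2 = S2 - face_boundary F1"
    using Jordan_curve_S2[OF c(1,2)] c(3) face_boundary_subset_G[OF F1] G_subset_S2 by (metis subset_trans)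
  have "F1 = U1 \<or> F1 = U2" "F2 = U1 \<or> F2 = U2"
    using face_side_of_boundary[OF F1 U] face_side_of_boundary[OF F2 U[unfolded eq]] by auto
  then have "F1 \<union> F2 = S2 - face_boundary F1" using U(6) \<open>F1 \<noteq> F2\<close> by auto
  then have "G \<subseteq> face_boundary F1" using G_subset_S2 face_subset[OF F1] face_subset[OF F2] by blast
  then have "G = face_boundary F1" using face_boundary_subset_G[OF F1] by blast
  then show False using not_circle face_boundary_circle[OF F1] by simp
qed

lemma finite_Faces: "finite Faces"
proof -
  have "inj_on boundary_edges Faces"
    using face_boundary_inj face_boundary_eq_edges_image by (metis inj_onI)
  moreover have "boundary_edges ` Faces \<subseteq> Pow E" using boundary_edges_subset by auto
  then have "finite (boundary_edges ` Faces)" using finite_E finite_subset by blast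
  ultimately show ?thesis using finite_imageD by blast
qed

lemma face_at_edge_in_region:
  assumes e: "e \<in> E" and U: "U \<subseteq> S2" "\<And>F. F \<in> Faces \<Longrightarrow> F \<inter> U \<noteq> {} \<Longrightarrow> F \<subseteq> U"
    and lim: "pe e (1/2) islimpt (U - G)"
  shows "\<exists>F\<in>Faces. F \<subseteq> U \<and> e \<in> boundary_edges F"
proof -
  have "U - G \<subseteq> (\<Union>F\<in>{F\<in>Faces. F \<subseteq> U}. F)"
  proof
    fix y assume y: "y \<in> U - G"
    then obtain F where "F \<in> Faces" "y \<in> F" using U(1) Union_Faces by blast
    then show "y \<in> (\<Union>F\<in>{F\<in>Faces. F \<subseteq> U}. F)" using U(2) y by blast
  qed
  then have "pe e (1/2) islimpt (\<Union>F\<in>{F\<in>Faces. F \<subseteq> U}. F)" using lim islimpt_subset by blast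
  moreover have "finite {F\<in>Faces. F \<subseteq> U}" using finite_Faces by simp
  ultimately obtain F where F: "F \<in> Faces" "F \<subseteq> U" "pe e (1/2) islimpt F"
    using islimpt_UN_finite[of "{F\<in>Faces. F \<subseteq> U}" _ "\<lambda>F. F"] by blast
  moreover have "pe e (1/2) \<in> G"
    using edge_interior_midpoint edge_interior_subset[OF e] e by (auto simp: graph_image_eq)
  ultimately have "e \<in> boundary_edges F"
    using islimpt_face_imp_boundary edge_in_boundary_edges[OF F(1) e edge_interior_midpoint] by blast
  then show ?thesis using F by blast
qed

text \<open>Near an interior point of an edge on the boundary circle of F1, the only points of the
  graph lie on that circle, so the side of the circle not containing F1 also accumulates at the
  edge and contributes a second face.\<close>

lemma second_face_at_edge:
  assumes F1: "F1 \<in> Faces" and e: "e \<in> boundary_edges F1"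
    and Ub: "openin (top_of_set S2) Ub" "Ub \<subseteq> S2 - face_boundary F1" "face_boundary F1 \<subseteq> closure Ub"
      "F1 \<inter> Ub = {}" "\<And>F. F \<in> Faces \<Longrightarrow> F \<inter> Ub \<noteq> {} \<Longrightarrow> F \<subseteq> Ub"
  shows "\<exists>F2\<in>Faces. F2 \<noteq> F1 \<and> e \<in> boundary_edges F2"
proof -
  have eE: "e \<in> E" and eJ: "edge_image e \<subseteq> face_boundary F1" using e by (auto simp: boundary_edges_def)
  define x where "x = pe e (1/2)"
  have xe: "x \<in> edge_interior e" unfolding x_def by (rule edge_interior_midpoint)
  obtain r where r: "r > 0" "ball x r \<inter> G \<subseteq> edge_interior e" using edge_interior_isolated[OF eE xe] by blast
  have "x islimpt (Ub - G)"
    unfolding islimpt_approachable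
  proof (intro allI impI)
    fix \<epsilon> :: real assume "\<epsilon> > 0"
    have "x \<in> closure Ub" using Ub(3) eJ edge_interior_subset[OF eE] xe by blast
    then obtain y where y: "y \<in> Ub" "dist y x < min \<epsilon> r"
      using \<open>\<epsilon> > 0\<close> r(1) unfolding closure_approachable by (metis min_less_iff_conj)
    then have "y \<notin> edge_image e" using Ub(2) eJ by blast
    then have "y \<notin> G" using r y edge_interior_subset[OF eE] by (auto simp: dist_commute)
    moreover have "y \<noteq> x" using \<open>y \<notin> edge_image e\<close> xe edge_interior_subset[OF eE] by blast
    ultimately show "\<exists>y'\<in>Ub - G. y' \<noteq> x \<and> dist y' x < \<epsilon>" using y by auto
  qed
  then obtain F2 where "F2 \<in> Faces" "F2 \<subseteq> Ub" "e \<in> boundary_edges F2"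
    using face_at_edge_in_region[OF eE _ Ub(5)] Ub(2) x_def by blast
  moreover have "F2 \<noteq> F1" using calculation Ub(4) face_nonempty by blast
  ultimately show ?thesis by blast
qed

lemma edge_on_two_faces:
  assumes e: "e \<in> E"
  obtains F1 F2 where "F1 \<in> Faces" "F2 \<in> Faces" "F1 \<noteq> F2" "e \<in> boundary_edges F1" "e \<in> boundary_edges F2"
proof -
  have "pe e (1/2) \<in> G"
    using edge_interior_midpoint edge_interior_subset[OF e] e by (auto simp: graph_image_eq)
  then have "pe e (1/2) islimpt (S2 - G)" by (rule islimpt_S2_minus_G)
  moreover have "F \<subseteq> S2" if "F \<in> Faces" for F using face_subset[OF that] by blast
  ultimately obtain F1 where F1: "F1 \<in> Faces" "e \<in> boundary_edges F1"
    using face_at_edge_in_region[OF e order_refl] by blast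
  obtain c where c: "simple_path c" "pathfinish c = pathstart c" "path_image c = face_boundary F1"
    using homeomorphic_circle_simple_loop[OF face_boundary_circle[OF F1(1)]] by blast
  obtain U1 U2 where U: "openin (top_of_set S2) U1" "openin (top_of_set S2) U2"
    "connected U1" "connected U2" "U1 \<inter> U2 = {}" "U1 \<union> U2 = S2 - face_boundary F1"
    "face_boundary F1 \<subseteq> closure U1" "face_boundary F1 \<subseteq> closure U2"
    using Jordan_curve_S2[OF c(1,2)] c(3) face_boundary_subset_G[OF F1(1)] G_subset_S2 by (metis subset_trans)
  have sides: "F \<subseteq> U1 \<or> F \<subseteq> U2" if "F \<in> Faces" for F
    using face_in_side[OF that face_boundary_subset_G[OF F1(1)] U(1,2,5,6)] .
  have "\<exists>F2\<in>Faces. F2 \<noteq> F1 \<and> e \<in> boundary_edges F2"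
  proof (cases "F1 = U1")
    case True
    have "F \<subseteq> U2" if "F \<in> Faces" "F \<inter> U2 \<noteq> {}" for F using sides[OF that(1)] that(2) U(5) by blast
    moreover have "U2 \<subseteq> S2 - face_boundary F1" "F1 \<inter> U2 = {}" using U(5,6) True by auto
    ultimately show ?thesis using second_face_at_edge[OF F1 U(2) _ U(8)] by blast
  next
    case False
    then have "F1 = U2" using face_side_of_boundary[OF F1(1) U(1-6)] by blast
    have "F \<subseteq> U1" if "F \<in> Faces" "F \<inter> U1 \<noteq> {}" for F using sides[OF that(1)] that(2) U(5) by blast
    moreover have "U1 \<subseteq> S2 - face_boundary F1" "F1 \<inter> U1 = {}" using U(5,6) \<open>F1 = U2\<close> by auto
    ultimately show ?thesis using second_face_at_edge[OF F1 U(1) _ U(7)] by blast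
  qed
  then show ?thesis using that F1 by blast
qed

lemma faces_cycle_through_iff:
  assumes "C \<in> cycles_through E pe e"
  shows "(\<exists>F\<in>Faces. Q F \<and> face_boundary F = edges_image pe C) \<longleftrightarrow>
    (\<exists>F\<in>Faces. Q F \<and> e \<in> boundary_edges F \<and> C = boundary_edges F)"
  using assms face_boundary_eq_edges_image_iff face_boundary_eq_edges_image
  by (auto simp: cycles_through_def cycles_def is_cycle_def)

end

lemma (in cellular_embedding) checkerboard_faces_at_edge:
  assumes chk: "is_checkerboard V E pv pe col" and e: "e \<in> E"
  shows "\<exists>F1 F2. col F1 \<noteq> col F2 \<and> {F\<in>Faces. e \<in> boundary_edges F} = {F1, F2}"
proof -
  obtain F1 F2 where F: "F1 \<in> Faces" "F2 \<in> Faces" "F1 \<noteq> F2" "e \<in> boundary_edges F1" "e \<in> boundary_edges F2"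
    using edge_on_two_faces[OF e] by blast
  have adjacent: "col Fa \<noteq> col Fb"
    if "Fa \<in> Faces" "Fb \<in> Faces" "Fa \<noteq> Fb" "e \<in> boundary_edges Fa" "e \<in> boundary_edges Fb" for Fa Fb
  proof -
    have "edge_image e \<subseteq> closure Fa \<inter> closure Fb"
      using that(4,5) closure_face_eq by (auto simp: boundary_edges_def)
    then show ?thesis using chk that(1-3) e unfolding is_checkerboard_def by blast
  qed
  then have "col F1 \<noteq> col F2" using F by blast
  moreover have "F = F1 \<or> F = F2" if "F \<in> Faces" "e \<in> boundary_edges F" for F
    using adjacent[OF that(1) F(1) _ that(2) F(4)] adjacent[OF that(1) F(2) _ that(2) F(5)] calculation
    by blast
  ultimately show ?thesis using F by blast
qed

lemma (in cellular_embedding) omega_sum_cycles_through_edge: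
  assumes chk: "is_checkerboard V E pv pe col" and e: "e \<in> E"
  shows "(\<Sum>C\<in>cycles_through E pe e. omega V E pv pe col C) = 0"
proof -
  obtain F1 F2 where col12: "col F1 \<noteq> col F2" and at_e: "{F\<in>Faces. e \<in> boundary_edges F} = {F1, F2}"
    using checkerboard_faces_at_edge[OF chk e] by blast
  then have F: "F1 \<in> Faces" "F2 \<in> Faces" "F1 \<noteq> F2" "e \<in> boundary_edges F1" "e \<in> boundary_edges F2"
    by blast+
  define C1 C2 where "C1 = boundary_edges F1" and "C2 = boundary_edges F2"
  have C12: "C1 \<noteq> C2"
    using face_boundary_inj[OF F(1-3)] face_boundary_eq_edges_image F(1,2) by (auto simp: C1_def C2_def)
  have C_in: "C1 \<in> cycles_through E pe e" "C2 \<in> cycles_through E pe e"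
    using boundary_edges_in_cycles_through F by (auto simp: C1_def C2_def)
  have coloured: "(\<exists>F\<in>Faces. Q (col F) \<and> face_boundary F = edges_image pe C) \<longleftrightarrow>
      Q (col F1) \<and> C = C1 \<or> Q (col F2) \<and> C = C2" if "C \<in> cycles_through E pe e" for C Q
    using faces_cycle_through_iff[OF that, of "\<lambda>F. Q (col F)"] at_e by (auto simp: C1_def C2_def)
  have omega: "omega V E pv pe col C =
      (if C = C1 then (if col F1 then 1 else -1) else if C = C2 then (if col F2 then 1 else -1) else 0)"
    if "C \<in> cycles_through E pe e" for C
    using coloured[OF that, of "\<lambda>b. b"] coloured[OF that, of Not] that C12
    by (auto simp: omega_def black_cycles_def white_cycles_def cycles_through_def)
  have "finite (cycles_through E pe e)"
    using finite_E by (rule finite_subset[rotated, OF finite_Pow_iff[THEN iffD2]])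
      (auto simp: cycles_through_def cycles_def is_cycle_def)
  then have "(\<Sum>C\<in>cycles_through E pe e. omega V E pv pe col C) = (\<Sum>C\<in>{C1, C2}. omega V E pv pe col C)"
    using C_in omega by (intro sum.mono_neutral_right) auto
  also have "\<dots> = 0" using C12 col12 omega[OF C_in(1)] omega[OF C_in(2)] by auto
  finally show ?thesis .
qed

theorem proposition4p1:
  fixes V :: "'v set" and E :: "'e set" and src tgt :: "'e \<Rightarrow> 'v"
    and pv :: "'v \<Rightarrow> real^3" and pe :: "'e \<Rightarrow> real \<Rightarrow> real^3"
    and col :: "(real^3) set \<Rightarrow> bool"
  assumes "is_graph V E src tgt"
    and "is_embedding V E src tgt pv pe"
    and "\<not> (graph_image V E pv pe homeomorphic sphere (0::complex) 1)"
    and "is_cellular V E pv pe"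
    and "is_checkerboard V E pv pe col"
    and "e \<in> E"
  shows "(\<Sum>C\<in>cycles_through E pe e. omega V E pv pe col C) = 0"
proof -
  interpret cellular_embedding V E src tgt pv pe
    using assms(1-4) by unfold_locales
  show ?thesis using omega_sum_cycles_through_edge[OF assms(5,6)] .
qed

end
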